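(* For every integer $j\ge 0$: if $j$ is even then $\mathfrak{krv}^{(3,j)}=0$, and if $j$ is odd then $\mathfrak{krv}^{(3,j)}=\{u_\Gamma:\ \Gamma\in F(L)^{(3,j)}\}$.
   Context: Let $A=\mathbb{R}\langle x,y\rangle$ be the free associative algebra and $L\subset A$ the free Lie algebra on $x,y$ (smallest Lie subalgebra of $(A,[a,b]=ab-ba)$ containing $x,y$). Let $\operatorname{tr}=A/\operatorname{span}\{ab-ba\}$ with projection $a\mapsto\operatorname{tr}(a)$. Let $F(L)$ be the quotient of $L\otimes L$ by the span of $a\otimes b-b\otimes a$ and $a\otimes[b,c]-[a,b]\otimes c$, with projection $\Theta$, regarded as a subspace of $\operatorname{tr}$ via $\Theta(a\otimes b)\mapsto\operatorname{tr}(ab)$; $F(L)^{(i,j)}$ is the span of classes with exactly $i$ letters $x$ and $j$ letters $y$. For $x_0\in\{x,y\}$, $\partial_{x_0}:\operatorname{tr}\to A$ is $\operatorname{tr}(a_1\cdots a_n)\mapsto\sum_{i:\,a_i=x_0}a_{i+1}\cdots a_n a_1\cdots a_{i-1}$. For $\Gamma\in F(L)$, $u_\Gamma$ is the derivation of $L$ with $u_\Gamma(x)=\partial_y\Gamma$, $u_\Gamma(y)=-\partial_x\Gamma$. For $l\in A$ let $\partial^A_{x_0}(l)=\sum\partial^1\otimes\partial^2$ be the sum over occurrences of $x_0$ in monomials of (prefix)$\otimes$(suffix), and $\partial^L_{x_0}(l)=\sum\partial^1\epsilon(\partial^2)$ with $\epsilon$ the constant term. $\operatorname{div}(u)=\operatorname{tr}(\partial^L_x(u(x))+\partial^L_y(u(y)))$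 for $u\in\operatorname{Der}(L)$. $\mathfrak{krv}=\{u\in\operatorname{Der}(L):u([x,y])=0,\ \operatorname{div}(u)=0\}$, and $\mathfrak{krv}^{(i,j)}$ is the set of $u\in\mathfrak{krv}$ raising $x$-degree by $i-1$ and $y$-degree by $j-1$ (equivalently $u=u_\Gamma$ with $\Gamma\in F(L)^{(i,j)}$). *)

theory Defs
  imports Complex_Main "HOL-Library.Function_Algebras"
begin

datatype letter = X | Y

(* Elements of R<x,y> are represented by their coefficient functions on words.
   The algebra A itself is the set of finitely supported coefficient functions. *)
type_synonym ncs = "letter list \<Rightarrow> real"

definition polys :: "ncs set" where
  "polys = {a. finite {w. a w \<noteq> 0}}"

definition mono :: "letter list \<Rightarrow> ncs" where
  "mono w = (\<lambda>v. if v = w then 1 else 0)"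

definition gen :: "letter \<Rightarrow> ncs" where
  "gen c = mono [c]"

definition smul :: "real \<Rightarrow> ncs \<Rightarrow> ncs" where
  "smul c a = (\<lambda>w. c * a w)"

definition nmul :: "ncs \<Rightarrow> ncs \<Rightarrow> ncs" where
  "nmul a b = (\<lambda>w. \<Sum>k\<le>length w. a (take k w) * b (drop k w))"

definition bracket :: "ncs \<Rightarrow> ncs \<Rightarrow> ncs" where
  "bracket a b = nmul a b - nmul b a"

inductive_set lspan :: "ncs set \<Rightarrow> ncs set" for S where
  lspan_zero: "0 \<in> lspan S"
| lspan_base: "a \<in> S \<Longrightarrow> a \<in> lspan S"
| lspan_add: "a \<in> lspan S \<Longrightarrow> b \<in> lspan S \<Longrightarrow> a + b \<in> lspan S"
| lspan_smul: "a \<in> lspan S \<Longrightarrow> smul c a \<in> lspan S"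

(* the free Lie algebra L: smallest Lie subalgebra of (A,[,]) containing x, y *)
inductive_set freeLie :: "ncs set" where
  fl_gen: "gen c \<in> freeLie"
| fl_zero: "0 \<in> freeLie"
| fl_add: "a \<in> freeLie \<Longrightarrow> b \<in> freeLie \<Longrightarrow> a + b \<in> freeLie"
| fl_smul: "a \<in> freeLie \<Longrightarrow> smul c a \<in> freeLie"
| fl_bracket: "a \<in> freeLie \<Longrightarrow> b \<in> freeLie \<Longrightarrow> bracket a b \<in> freeLie"

(* homogeneity of bidegree (p, q) = (#x, #y); degrees are integers so that
   a negative degree forces the element to vanish *)
definition homog :: "int \<Rightarrow> int \<Rightarrow> ncs \<Rightarrow> bool" where
  "homog p q a \<longleftrightarrow> (\<forall>w. a w \<noteq> 0 \<longrightarrow>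
      int (count_list w X) = p \<and> int (count_list w Y) = q)"

(* tr(a) = 0 in tr = A / span{ab - ba} *)
definition trzero :: "ncs \<Rightarrow> bool" where
  "trzero a \<longleftrightarrow> a \<in> lspan {nmul p q - nmul q p | p q. p \<in> polys \<and> q \<in> polys}"

(* cyclic derivative \<partial>_{x0} applied to tr(g), computed on a representative g \<in> A:
   tr(a_1...a_n) \<mapsto> sum over i with a_i = x0 of a_{i+1}...a_n a_1...a_{i-1} *)
definition dcyc :: "letter \<Rightarrow> ncs \<Rightarrow> ncs" where
  "dcyc x0 g = (\<lambda>v. \<Sum>k\<le>length v. g (drop k v @ x0 # take k v))"

(* \<partial>^A_{x0}(l) \<in> A \<otimes> A, as a coefficient function on pairs (prefix, suffix) *)
definition dA :: "letter \<Rightarrow> ncs \<Rightarrow> (letter list \<times> letter list \<Rightarrow> real)" where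
  "dA x0 l = (\<lambda>(p, s). l (p @ x0 # s))"

(* \<partial>^L_{x0}(l) = (id \<otimes> \<epsilon>)(\<partial>^A_{x0} l) *)
definition dL :: "letter \<Rightarrow> ncs \<Rightarrow> ncs" where
  "dL x0 l = (\<lambda>p. \<Sum>s\<in>{[]}. dA x0 l (p, s))"

(* Derivations of L, represented as maps A \<rightarrow> A vanishing outside L *)
definition DerL :: "(ncs \<Rightarrow> ncs) set" where
  "DerL = {D. (\<forall>l. l \<notin> freeLie \<longrightarrow> D l = 0)
            \<and> (\<forall>l\<in>freeLie. D l \<in> freeLie)
            \<and> (\<forall>a\<in>freeLie. \<forall>b\<in>freeLie. D (a + b) = D a + D b)
            \<and> (\<forall>c. \<forall>a\<in>freeLie. D (smul c a) = smul c (D a))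
            \<and> (\<forall>a\<in>freeLie. \<forall>b\<in>freeLie.
                 D (bracket a b) = bracket (D a) b + bracket a (D b))}"

definition divg :: "(ncs \<Rightarrow> ncs) \<Rightarrow> ncs" where
  "divg u = dL X (u (gen X)) + dL Y (u (gen Y))"

definition krv :: "nat \<Rightarrow> nat \<Rightarrow> (ncs \<Rightarrow> ncs) set" where
  "krv i j = {u \<in> DerL. u (bracket (gen X) (gen Y)) = 0 \<and> trzero (divg u)
      \<and> (\<forall>l\<in>freeLie. \<forall>p q. homog p q l \<longrightarrow>
             homog (p + int i - 1) (q + int j - 1) (u l))}"

(* the associative derivation of A sending x \<mapsto> a, y \<mapsto> b *)
definition derA :: "ncs \<Rightarrow> ncs \<Rightarrow> ncs \<Rightarrow> ncs" where
  "derA a b g = (\<lambda>v. \<Sum>w\<in>{w. g w \<noteq> 0}. g w *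
      (\<Sum>i<length w. nmul (nmul (mono (take i w)) (if w ! i = X then a else b))
                           (mono (drop (Suc i) w)) v))"

(* u_\<Gamma> for \<Gamma> = tr(g): the derivation of L with x \<mapsto> \<partial>_y \<Gamma>, y \<mapsto> -\<partial>_x \<Gamma> *)
definition uGamma :: "ncs \<Rightarrow> (ncs \<Rightarrow> ncs)" where
  "uGamma g = (\<lambda>l. if l \<in> freeLie then derA (dcyc Y g) (- dcyc X g) l else 0)"

(* representatives in A of F(L)^{(i,j)} \<subseteq> tr: span of a b with a, b \<in> L homogeneous,
   total bidegree (i, j); F(L)^{(i,j)} is the image of this set under tr *)
definition FLrep :: "nat \<Rightarrow> nat \<Rightarrow> ncs set" where
  "FLrep i j = lspan {nmul a b | a b i1 j1 i2 j2. a \<in> freeLie \<and> b \<in> freeLie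
      \<and> homog i1 j1 a \<and> homog i2 j2 b \<and> i1 + i2 = int i \<and> j1 + j2 = int j}"

end

theory Submission
  imports Defs
begin

text \<open>
  Write \<open>G = u(x)\<close> and \<open>F = u(y)\<close>, Lie elements of bidegrees \<open>(3, j-1)\<close> and \<open>(2, j)\<close>.
  Sending a word \<open>y^a0 x y^a1 ... x y^ak\<close> to the commutative monomial \<open>t0^a0 ... tk^ak\<close>
  is injective on elements with a fixed number of letters \<open>x\<close>, and it turns products into
  products of evaluations at shifted arguments. Let \<open>f(a,b,c)\<close> be the evaluation of \<open>F\<close>.
  The condition \<open>u([x,y]) = 0\<close> makes \<open>f\<close> invariant under cyclic permutations, the antipode
  of the Lie element \<open>F\<close> gives \<open>f(c,b,a) = (-1)^(j+1) f(a,b,c)\<close>, and Lie elements are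
  invariant under translating all arguments simultaneously.

  The divergence has two letters \<open>x\<close>, so its trace vanishes iff its cyclic \<open>x\<close>-derivative
  does, and evaluating that derivative expresses it through \<open>f(r,s,0) - f(s,r,0)\<close>. For odd
  \<open>j\<close> this vanishes identically, and \<open>u = u_\<Gamma>\<close> for \<open>\<Gamma> = -tr(x F)/3\<close>. For even \<open>j\<close> the
  divergence condition forces \<open>f = 0\<close>, hence \<open>F = 0\<close>, and then \<open>G = 0\<close> because
  \<open>[G, y] = 0\<close>.
\<close>

section \<open>Words and finitely supported coefficient functions\<close>

lemma sum_lessThan_add: "(\<Sum>i<m + n. f i) = (\<Sum>i<m. f i) + (\<Sum>i<n. f (m + i))"
  for f :: "nat \<Rightarrow> 'a::comm_monoid_add"
  by (induction n) (simp_all add: add.assoc)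

lemma sum_atMost_flip: "(\<Sum>i\<le>n. g i) = (\<Sum>i\<le>n. g (n - i))" for g :: "nat \<Rightarrow> 'a::comm_monoid_add"
  by (rule sum.reindex_bij_witness[where i="\<lambda>i. n - i" and j="\<lambda>i. n - i"]) auto

lemma letter_cases: "(c::letter) = X \<or> c = Y" by (cases c) auto

lemma length_count: "length w = count_list w X + count_list w Y"
proof (induction w)
  case (Cons a w) then show ?case by (cases a) auto
qed simp

lemma count_split: "i < length w \<Longrightarrow>
   count_list w c = count_list (take i w) c + count_list (drop (Suc i) w) c + (if w ! i = c then 1 else 0)"
  by (subst id_take_nth_drop[of i w]) (simp_all add: count_list_append)

lemma count_X_eq_0_iff: "count_list u X = 0 \<longleftrightarrow> X \<notin> set u"
  by (induction u) auto

lemma count_X_replicate_Y: "count_list (replicate n Y) X = 0" by (induction n) auto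

lemma no_X_imp_replicate_Y: "count_list w X = 0 \<Longrightarrow> w = replicate (length w) Y"
proof (induction w)
  case Nil then show ?case by simp
next
  case (Cons c w) then show ?case using letter_cases[of c] by (auto split: if_splits)
qed

lemma split_first_X: "X \<in> set w \<Longrightarrow> \<exists>n v. w = replicate n Y @ X # v"
proof (induction w)
  case Nil then show ?case by simp
next
  case (Cons c w)
  show ?case
  proof (cases c)
    case X then show ?thesis by (metis append.left_neutral replicate_0)
  next
    case Y
    with Cons obtain n v where "w = replicate n Y @ X # v" by auto
    with Y have "c # w = replicate (Suc n) Y @ X # v" by simp
    then show ?thesis by blast
  qed
qed

lemma replicate_Y_X_inj: "replicate n Y @ X # w = replicate m Y @ X # v \<Longrightarrow> n = m \<and> w = v"
proof (induction n arbitrary: m)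
  case 0 then show ?case by (cases m) auto
next
  case (Suc n) then show ?case by (cases m) auto
qed

definition supp :: "ncs \<Rightarrow> letter list set" where "supp a = {w. a w \<noteq> 0}"

lemma polys_iff: "a \<in> polys \<longleftrightarrow> finite (supp a)" by (simp add: polys_def supp_def)

lemma supp_add: "supp (a + b) \<subseteq> supp a \<union> supp b" by (auto simp: supp_def)

lemma supp_diff: "supp (a - b) \<subseteq> supp a \<union> supp b" by (auto simp: supp_def)

lemma supp_smul: "supp (smul c a) \<subseteq> supp a" by (auto simp: supp_def smul_def)

lemma supp_uminus: "supp (- a) = supp a" by (auto simp: supp_def)

lemma supp_mono: "supp (mono u) = {u}" by (auto simp: supp_def mono_def)

lemma polys_zero: "0 \<in> polys" by (simp add: polys_def)

lemma polys_add: "a \<in> polys \<Longrightarrow> b \<in> polys \<Longrightarrow> a + b \<in> polys"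
  by (meson finite_UnI polys_iff rev_finite_subset supp_add)

lemma polys_diff: "a \<in> polys \<Longrightarrow> b \<in> polys \<Longrightarrow> a - b \<in> polys"
  by (meson finite_UnI polys_iff rev_finite_subset supp_diff)

lemma polys_smul: "a \<in> polys \<Longrightarrow> smul c a \<in> polys"
  by (meson polys_iff rev_finite_subset supp_smul)

lemma polys_uminus: "a \<in> polys \<Longrightarrow> - a \<in> polys"
  by (simp add: polys_iff supp_uminus)

lemma polys_mono: "mono u \<in> polys" by (simp add: polys_iff supp_mono)

lemma polys_gen: "gen c \<in> polys" by (simp add: gen_def polys_mono)

lemma smul_minus_one: "smul (-1) a = - a" by (simp add: smul_def fun_eq_iff)

lemma smul_zero: "smul k 0 = 0" by (simp add: smul_def fun_eq_iff)

lemma zero_fun_eta[simp]: "(\<lambda>a::letter list. 0::real) = 0" by (simp add: fun_eq_iff)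

lemma plus_fun_eta[simp]: "(\<lambda>c::letter list. (a::ncs) c + b c) = a + b" by (simp add: fun_eq_iff)

lemma minus_fun_eta[simp]: "(\<lambda>c::letter list. (a::ncs) c - b c) = a - b" by (simp add: fun_eq_iff)

lemma uminus_fun_eta[simp]: "(\<lambda>c::letter list. - (a::ncs) c) = - a" by (simp add: fun_eq_iff)

lemma polys_sum:
  assumes "finite I" "\<And>i. i \<in> I \<Longrightarrow> f i \<in> polys"
  shows "(\<lambda>v. \<Sum>i\<in>I. f i v) \<in> polys"
  using assms
proof (induction I rule: finite_induct)
  case (insert x I)
  have "(\<lambda>v. \<Sum>i\<in>insert x I. f i v) = f x + (\<lambda>v. \<Sum>i\<in>I. f i v)"
    using insert by (simp add: fun_eq_iff)
  then show ?case using insert by (simp add: polys_add)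
qed (simp add: polys_zero)

definition linext :: "(letter list \<Rightarrow> ncs) \<Rightarrow> ncs \<Rightarrow> ncs" where
  "linext f g = (\<lambda>v. \<Sum>w\<in>supp g. g w * f w v)"

lemma linext_superset: "finite S \<Longrightarrow> supp g \<subseteq> S \<Longrightarrow> linext f g = (\<lambda>v. \<Sum>w\<in>S. g w * f w v)"
  unfolding linext_def by (intro ext sum.mono_neutral_left) (auto simp: supp_def)

lemma supp_lincomb_mono: "supp (\<lambda>v. \<Sum>i\<in>I. c i * mono (u i) v) \<subseteq> u ` I"
proof
  fix w assume "w \<in> supp (\<lambda>v. \<Sum>i\<in>I. c i * mono (u i) v)"
  then have "(\<Sum>i\<in>I. c i * mono (u i) w) \<noteq> 0" by (simp add: supp_def)
  then obtain i where "i \<in> I" "c i * mono (u i) w \<noteq> 0" by (meson sum.neutral)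
  then show "w \<in> u ` I" by (auto simp: mono_def split: if_splits)
qed

lemma linext_lincomb_mono: assumes "finite I"
  shows "linext f (\<lambda>v. \<Sum>i\<in>I. c i * mono (u i) v) = (\<lambda>v. \<Sum>i\<in>I. c i * f (u i) v)"
proof
  fix v
  have "linext f (\<lambda>v. \<Sum>i\<in>I. c i * mono (u i) v) v = (\<Sum>w\<in>u ` I. (\<Sum>i\<in>I. c i * mono (u i) w) * f w v)"
    using linext_superset[OF finite_imageI[OF assms] supp_lincomb_mono] by simp
  also have "\<dots> = (\<Sum>w\<in>u ` I. (\<Sum>i\<in>{i\<in>I. u i = w}. c i * f (u i) v))"
  proof (intro sum.cong refl)
    fix w assume "w \<in> u ` I"
    have "(\<Sum>i\<in>I. c i * mono (u i) w) * f w v = (\<Sum>i\<in>I. if u i = w then c i * f w v else 0)"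
      by (auto simp: sum_distrib_right mono_def intro!: sum.cong)
    also have "\<dots> = (\<Sum>i\<in>{i\<in>I. u i = w}. c i * f w v)"
      using assms by (simp add: sum.inter_filter)
    also have "\<dots> = (\<Sum>i\<in>{i\<in>I. u i = w}. c i * f (u i) v)"
      by (rule sum.cong) auto
    finally show "(\<Sum>i\<in>I. c i * mono (u i) w) * f w v = (\<Sum>i\<in>{i\<in>I. u i = w}. c i * f (u i) v)" .
  qed
  also have "\<dots> = (\<Sum>i\<in>I. c i * f (u i) v)"
    using sum.image_gen[OF assms, of "\<lambda>i. c i * f (u i) v" u] by simp
  finally show "linext f (\<lambda>v. \<Sum>i\<in>I. c i * mono (u i) v) v = (\<Sum>i\<in>I. c i * f (u i) v)" .
qed

lemma poly_eq_lincomb_mono: assumes "a \<in> polys" shows "a = (\<lambda>v. \<Sum>w\<in>supp a. a w * mono w v)"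
proof
  fix v
  have "(\<Sum>w\<in>supp a. a w * mono w v) = (\<Sum>w\<in>supp a. if w = v then a v else 0)"
    by (intro sum.cong) (auto simp: mono_def)
  also have "\<dots> = a v" using assms by (simp add: polys_iff supp_def)
  finally show "a v = (\<Sum>w\<in>supp a. a w * mono w v)" by simp
qed

lemma linext_add: "a \<in> polys \<Longrightarrow> b \<in> polys \<Longrightarrow> linext f (a + b) = linext f a + linext f b"
proof -
  assume a: "a \<in> polys" and b: "b \<in> polys"
  let ?S = "supp a \<union> supp b"
  have fin: "finite ?S" using a b by (simp add: polys_iff)
  have "linext f (a + b) = (\<lambda>v. \<Sum>w\<in>?S. (a + b) w * f w v)" by (rule linext_superset[OF fin supp_add])
  moreover have "linext f a = (\<lambda>v. \<Sum>w\<in>?S. a w * f w v)" by (rule linext_superset[OF fin]) auto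
  moreover have "linext f b = (\<lambda>v. \<Sum>w\<in>?S. b w * f w v)" by (rule linext_superset[OF fin]) auto
  ultimately show ?thesis by (auto simp: distrib_right sum.distrib)
qed

lemma linext_smul: "a \<in> polys \<Longrightarrow> linext f (smul c a) = smul c (linext f a)"
proof -
  assume a: "a \<in> polys"
  have fin: "finite (supp a)" using a by (simp add: polys_iff)
  have "linext f (smul c a) = (\<lambda>v. \<Sum>w\<in>supp a. smul c a w * f w v)" by (rule linext_superset[OF fin supp_smul])
  then show ?thesis by (simp add: linext_def smul_def sum_distrib_left mult.assoc)
qed

lemma linext_zero: "linext f 0 = 0" by (simp add: linext_def supp_def fun_eq_iff)

lemma linext_uminus: "a \<in> polys \<Longrightarrow> linext f (- a) = - linext f a"
  by (simp add: linext_def supp_uminus fun_eq_iff sum_negf)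

lemma linext_diff: "a \<in> polys \<Longrightarrow> b \<in> polys \<Longrightarrow> linext f (a - b) = linext f a - linext f b"
  using linext_add[of a "- b" f] linext_uminus[of b f] by (simp add: polys_uminus)

lemma linext_mono: "linext f (mono u) = f u"
  unfolding linext_def supp_mono by (simp add: mono_def)

lemma linext_mono_id: "h \<in> polys \<Longrightarrow> linext mono h = h"
  by (subst (2) poly_eq_lincomb_mono) (simp_all add: linext_def)

lemma linext_diff_fun: "linext (\<lambda>w. A w - smul c (B w)) h = linext A h - smul c (linext B h)"
  unfolding linext_def smul_def fun_eq_iff
  by (simp add: right_diff_distrib sum_subtractf sum_distrib_left mult.left_commute)

lemma polys_linext:
  assumes "h \<in> polys" "\<And>w. w \<in> supp h \<Longrightarrow> f w \<in> polys"
  shows "linext f h \<in> polys"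
proof -
  have "linext f h = (\<lambda>v. \<Sum>w\<in>supp h. smul (h w) (f w) v)" by (simp add: linext_def smul_def)
  moreover have "finite (supp h)" using assms(1) by (simp add: polys_iff)
  ultimately show ?thesis using assms(2) by (simp add: polys_sum polys_smul)
qed

section \<open>The concatenation product\<close>

lemma nmul_sum_left: "nmul (\<lambda>v. \<Sum>i\<in>I. A i v) B = (\<lambda>v. \<Sum>i\<in>I. nmul (A i) B v)"
  unfolding nmul_def by (auto simp: sum_distrib_right intro!: ext sum.swap[THEN trans])

lemma nmul_sum_right: "nmul B (\<lambda>v. \<Sum>i\<in>I. A i v) = (\<lambda>v. \<Sum>i\<in>I. nmul B (A i) v)"
  unfolding nmul_def by (auto simp: sum_distrib_left intro!: ext sum.swap[THEN trans])

lemma nmul_cmult_left: "nmul (\<lambda>v. c * A v) B = (\<lambda>v. c * nmul A B v)"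
  unfolding nmul_def by (auto simp: sum_distrib_left mult.assoc)

lemma nmul_cmult_right: "nmul B (\<lambda>v. c * A v) = (\<lambda>v. c * nmul B A v)"
  unfolding nmul_def by (auto simp: sum_distrib_left mult.left_commute)

lemma nmul_add_left: "nmul (a + b) c = nmul a c + nmul b c"
  unfolding nmul_def by (auto simp: distrib_right sum.distrib)

lemma nmul_add_right: "nmul c (a + b) = nmul c a + nmul c b"
  unfolding nmul_def by (auto simp: distrib_left sum.distrib)

lemma nmul_uminus_left: "nmul (- a) c = - nmul a c"
  unfolding nmul_def by (auto simp: sum_negf)

lemma nmul_uminus_right: "nmul c (- a) = - nmul c a"
  unfolding nmul_def by (auto simp: sum_negf)

lemma nmul_diff_left: "nmul (a - b) c = nmul a c - nmul b c"
  using nmul_add_left[of a "- b" c] nmul_uminus_left[of b c] by simp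

lemma nmul_diff_right: "nmul c (a - b) = nmul c a - nmul c b"
  using nmul_add_right[of c a "- b"] nmul_uminus_right[of c b] by simp

lemma nmul_smul_right: "nmul c (smul k a) = smul k (nmul c a)"
  unfolding nmul_def smul_def by (auto simp: sum_distrib_left mult.left_commute)

lemma nmul_zero_left[simp]: "nmul 0 c = 0" unfolding nmul_def by (auto simp: fun_eq_iff)

lemma nmul_zero_right[simp]: "nmul c 0 = 0" unfolding nmul_def by (auto simp: fun_eq_iff)

lemma nmul_mono_left: "nmul (mono u) a v = (if take (length u) v = u then a (drop (length u) v) else 0)"
proof -
  have "nmul (mono u) a v = (\<Sum>k\<le>length v. if k = length u \<and> take (length u) v = u then a (drop (length u) v) else 0)"
    unfolding nmul_def mono_def by (intro sum.cong refl) auto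
  also have "\<dots> = (if take (length u) v = u then a (drop (length u) v) else 0)"
  proof (cases "take (length u) v = u")
    case True
    have "min (length u) (length v) = length u" using arg_cong[OF True, of length] by simp
    then have "length u \<le> length v" by linarith
    then show ?thesis using True by (simp add: sum.delta)
  qed simp
  finally show ?thesis .
qed

lemma nmul_mono_right: "nmul a (mono u) v = (if length u \<le> length v \<and> drop (length v - length u) v = u then a (take (length v - length u) v) else 0)"
proof -
  have "nmul a (mono u) v = (\<Sum>k\<le>length v. if k = length v - length u \<and> length u \<le> length v \<and> drop (length v - length u) v = u then a (take (length v - length u) v) else 0)"
    unfolding nmul_def mono_def by (intro sum.cong refl) auto
  also have "\<dots> = (if length u \<le> length v \<and> drop (length v - length u) v = u then a (take (length v - length u) v) else 0)"
    by (cases "length u \<le> length v \<and> drop (length v - length u) v = u") (auto simp: sum.delta intro!: sum.neutral)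
  finally show ?thesis .
qed

lemma nmul_mono_mono: "nmul (mono u) (mono w) = mono (u @ w)"
  unfolding fun_eq_iff nmul_mono_left by (auto simp: mono_def) (metis append_take_drop_id)

lemma nmul_one_left[simp]: "nmul (mono []) a = a"
  by (simp add: fun_eq_iff nmul_mono_left)

lemma nmul_one_right[simp]: "nmul a (mono []) = a"
  by (simp add: fun_eq_iff nmul_mono_right)

lemma nmul_gen_right: "nmul a (gen c) v = (if v \<noteq> [] \<and> last v = c then a (butlast v) else 0)"
proof (cases "v = []")
  case True then show ?thesis by (simp add: gen_def nmul_mono_right)
next
  case False
  then have "drop (length v - 1) v = [last v]"
    by (metis append_butlast_last_id append_eq_conv_conj length_butlast)
  moreover have "take (length v - 1) v = butlast v" by (simp add: butlast_conv_take)
  moreover have "Suc 0 \<le> length v" using False by (cases v) auto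
  ultimately show ?thesis using False by (simp add: gen_def nmul_mono_right)
qed

lemma nmul_gen_left: "nmul (gen c) a v = (if v \<noteq> [] \<and> hd v = c then a (tl v) else 0)"
  by (cases v) (simp_all add: gen_def nmul_mono_left drop_Suc)

lemma nmul_assoc: "nmul (nmul a b) c = nmul a (nmul b c)"
proof
  fix v :: "letter list"
  let ?n = "length v"
  let ?G = "\<lambda>l m. a (take l v) * b (take m (drop l v)) * c (drop m (drop l v))"
  have "nmul (nmul a b) c v = (\<Sum>k\<le>?n. \<Sum>l\<le>k. ?G l (k - l))"
    unfolding nmul_def
  proof (intro sum.cong refl)
    fix k assume k: "k \<in> {..?n}"
    then have lk: "length (take k v) = k" by simp
    have "(\<Sum>l\<le>length (take k v). a (take l (take k v)) * b (drop l (take k v))) * c (drop k v)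
        = (\<Sum>l\<le>k. a (take l (take k v)) * b (drop l (take k v)) * c (drop k v))"
      by (simp only: lk sum_distrib_right)
    also have "\<dots> = (\<Sum>l\<le>k. ?G l (k - l))"
    proof (intro sum.cong refl)
      fix l assume "l \<in> {..k}"
      then have "l \<le> k" by simp
      then have "take l (take k v) = take l v" "drop l (take k v) = take (k - l) (drop l v)"
        "drop k v = drop (k - l) (drop l v)"
        by (simp_all add: min_def drop_take)
      then show "a (take l (take k v)) * b (drop l (take k v)) * c (drop k v) = ?G l (k - l)" by simp
    qed
    finally show "(\<Sum>l\<le>length (take k v). a (take l (take k v)) * b (drop l (take k v))) * c (drop k v)
        = (\<Sum>l\<le>k. ?G l (k - l))" .
  qed
  also have "\<dots> = (\<Sum>(l,m)\<in>{(l,m). l + m \<le> ?n}. ?G l m)"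
    by (rule sum.triangle_reindex_eq[symmetric])
  also have "\<dots> = (\<Sum>l\<le>?n. \<Sum>m\<le>?n - l. ?G l m)"
  proof -
    have "{(l,m). l + m \<le> ?n} = Sigma {..?n} (\<lambda>l. {..?n - l})" by auto
    then show ?thesis by (subst sum.Sigma) auto
  qed
  also have "\<dots> = nmul a (nmul b c) v"
    unfolding nmul_def by (simp add: sum_distrib_left mult.assoc del: drop_drop)
  finally show "nmul (nmul a b) c v = nmul a (nmul b c) v" .
qed

lemma nmul_eq_lincomb_mono: assumes "p \<in> polys" "q \<in> polys"
  shows "nmul p q = (\<lambda>v. \<Sum>x\<in>supp p. \<Sum>y\<in>supp q. p x * q y * mono (x @ y) v)"
proof -
  have "nmul p q = nmul (\<lambda>v. \<Sum>x\<in>supp p. p x * mono x v) (\<lambda>v. \<Sum>y\<in>supp q. q y * mono y v)"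
    using poly_eq_lincomb_mono[OF assms(1)] poly_eq_lincomb_mono[OF assms(2)] by simp
  also have "\<dots> = (\<lambda>v. \<Sum>x\<in>supp p. nmul (\<lambda>v. p x * mono x v) (\<lambda>v. \<Sum>y\<in>supp q. q y * mono y v) v)"
    by (rule nmul_sum_left)
  also have "\<dots> = (\<lambda>v. \<Sum>x\<in>supp p. p x * nmul (mono x) (\<lambda>v. \<Sum>y\<in>supp q. q y * mono y v) v)"
    by (simp only: nmul_cmult_left)
  also have "\<dots> = (\<lambda>v. \<Sum>x\<in>supp p. p x * (\<Sum>y\<in>supp q. nmul (mono x) (\<lambda>v. q y * mono y v) v))"
    by (simp only: nmul_sum_right)
  also have "\<dots> = (\<lambda>v. \<Sum>x\<in>supp p. p x * (\<Sum>y\<in>supp q. q y * mono (x @ y) v))"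
    by (simp only: nmul_cmult_right nmul_mono_mono)
  also have "\<dots> = (\<lambda>v. \<Sum>x\<in>supp p. \<Sum>y\<in>supp q. p x * q y * mono (x @ y) v)"
    by (simp add: sum_distrib_left mult.assoc)
  finally show ?thesis .
qed

lemma nmul_eq_lincomb_mono_prod: assumes "p \<in> polys" "q \<in> polys"
  shows "nmul p q = (\<lambda>v. \<Sum>xy\<in>supp p \<times> supp q. (p (fst xy) * q (snd xy)) * mono (fst xy @ snd xy) v)"
  using nmul_eq_lincomb_mono[OF assms] by (simp add: sum.cartesian_product case_prod_beta)

lemma polys_nmul: assumes "p \<in> polys" "q \<in> polys" shows "nmul p q \<in> polys"
proof -
  have fin: "finite (supp p \<times> supp q)" using assms by (simp add: polys_iff)
  show ?thesis unfolding polys_iff nmul_eq_lincomb_mono_prod[OF assms]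
    by (rule finite_subset[OF supp_lincomb_mono finite_imageI[OF fin]])
qed

lemma polys_bracket: "p \<in> polys \<Longrightarrow> q \<in> polys \<Longrightarrow> bracket p q \<in> polys"
  by (simp add: bracket_def polys_diff polys_nmul)

lemma linext_nmul: assumes "p \<in> polys" "q \<in> polys"
  shows "linext f (nmul p q) = (\<lambda>v. \<Sum>x\<in>supp p. \<Sum>y\<in>supp q. p x * q y * f (x @ y) v)"
proof -
  have fin: "finite (supp p \<times> supp q)" using assms by (simp add: polys_iff)
  show ?thesis unfolding nmul_eq_lincomb_mono_prod[OF assms] linext_lincomb_mono[OF fin]
    by (simp add: sum.cartesian_product case_prod_beta)
qed

lemma nmul_linext_left: assumes "q \<in> polys"
  shows "nmul (linext f p) q = (\<lambda>v. \<Sum>x\<in>supp p. \<Sum>y\<in>supp q. p x * q y * nmul (f x) (mono y) v)"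
proof -
  have "nmul (linext f p) q = nmul (\<lambda>v. \<Sum>x\<in>supp p. p x * f x v) (\<lambda>v. \<Sum>y\<in>supp q. q y * mono y v)"
    using poly_eq_lincomb_mono[OF assms] by (simp add: linext_def)
  also have "\<dots> = (\<lambda>v. \<Sum>x\<in>supp p. \<Sum>y\<in>supp q. p x * q y * nmul (f x) (mono y) v)"
    by (simp only: nmul_sum_left nmul_cmult_left nmul_sum_right nmul_cmult_right sum_distrib_left mult.assoc)
  finally show ?thesis .
qed

lemma nmul_linext_right: assumes "p \<in> polys"
  shows "nmul p (linext f q) = (\<lambda>v. \<Sum>x\<in>supp p. \<Sum>y\<in>supp q. p x * q y * nmul (mono x) (f y) v)"
proof -
  have "nmul p (linext f q) = nmul (\<lambda>v. \<Sum>x\<in>supp p. p x * mono x v) (\<lambda>v. \<Sum>y\<in>supp q. q y * f y v)"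
    using poly_eq_lincomb_mono[OF assms] by (simp add: linext_def)
  also have "\<dots> = (\<lambda>v. \<Sum>x\<in>supp p. \<Sum>y\<in>supp q. p x * q y * nmul (mono x) (f y) v)"
    by (simp only: nmul_sum_left nmul_cmult_left nmul_sum_right nmul_cmult_right sum_distrib_left mult.assoc)
  finally show ?thesis .
qed

lemma commutes_with_Y_imp_0: assumes "nmul G (gen Y) = nmul (gen Y) G" "\<And>w. G w \<noteq> 0 \<Longrightarrow> X \<in> set w"
  shows "G = 0"
proof -
  have main: "G (replicate n Y @ X # v) = 0" for n v
  proof (induction n arbitrary: v)
    case 0
    have "G (X # v) = nmul G (gen Y) (X # v @ [Y])" by (simp add: nmul_gen_right)
    also have "\<dots> = nmul (gen Y) G (X # v @ [Y])" using assms(1) by simp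
    also have "\<dots> = 0" by (simp add: nmul_gen_left)
    finally show ?case by simp
  next
    case (Suc n)
    have "G (replicate (Suc n) Y @ X # v) = nmul G (gen Y) (replicate (Suc n) Y @ X # v @ [Y])"
      by (simp add: nmul_gen_right butlast_append)
    also have "\<dots> = nmul (gen Y) G (replicate (Suc n) Y @ X # v @ [Y])" using assms(1) by simp
    also have "\<dots> = G (replicate n Y @ X # v @ [Y])" by (simp add: nmul_gen_left)
    also have "\<dots> = 0" by (rule Suc.IH)
    finally show ?case .
  qed
  show ?thesis
  proof
    fix w show "G w = 0 w"
    proof (rule ccontr)
      assume "G w \<noteq> 0 w"
      then have "X \<in> set w" using assms(2) by simp
      then obtain n v where "w = replicate n Y @ X # v" using split_first_X by blast
      then show False using main \<open>G w \<noteq> 0 w\<close> by simp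
    qed
  qed
qed

lemma freeLie_polys: "l \<in> freeLie \<Longrightarrow> l \<in> polys"
  by (induction rule: freeLie.induct)
     (auto simp: polys_gen polys_zero polys_add polys_smul polys_bracket)

lemma freeLie_diff: "a \<in> freeLie \<Longrightarrow> b \<in> freeLie \<Longrightarrow> a - b \<in> freeLie"
  using fl_add[OF _ fl_smul[of b "-1"]] by (simp add: smul_minus_one)

lemma freeLie_uminus: "a \<in> freeLie \<Longrightarrow> - a \<in> freeLie"
  using fl_smul[of a "-1"] by (simp add: smul_minus_one)

lemma trzero_zero: "trzero 0" by (simp add: trzero_def lspan.lspan_zero)

lemma trzero_add: "trzero a \<Longrightarrow> trzero b \<Longrightarrow> trzero (a + b)" by (simp add: trzero_def lspan.lspan_add)

lemma trzero_smul: "trzero a \<Longrightarrow> trzero (smul c a)" by (simp add: trzero_def lspan.lspan_smul)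

lemma trzero_comm: "p \<in> polys \<Longrightarrow> q \<in> polys \<Longrightarrow> trzero (nmul p q - nmul q p)"
  unfolding trzero_def by (rule lspan.lspan_base) blast

lemma trzero_rot: "trzero (mono (u @ v) - mono (v @ u))"
  using trzero_comm[OF polys_mono polys_mono, of u v] by (simp add: nmul_mono_mono)

lemma trzero_sum: "finite I \<Longrightarrow> (\<And>i. i \<in> I \<Longrightarrow> trzero (f i)) \<Longrightarrow> trzero (\<lambda>v. \<Sum>i\<in>I. f i v)"
proof (induction I rule: finite_induct)
  case empty then show ?case using trzero_zero by simp
next
  case (insert x F)
  have e: "(\<lambda>v. \<Sum>i\<in>insert x F. f i v) = f x + (\<lambda>v. \<Sum>i\<in>F. f i v)"
    using insert by (simp add: fun_eq_iff)
  show ?case unfolding e using insert by (simp add: trzero_add)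
qed

lemma trzero_linext: assumes "h \<in> polys" "\<And>w. w \<in> supp h \<Longrightarrow> trzero (f w)" shows "trzero (linext f h)"
proof -
  have "linext f h = (\<lambda>v. \<Sum>w\<in>supp h. smul (h w) (f w) v)" by (simp add: linext_def smul_def)
  then show ?thesis using assms by (simp add: trzero_sum polys_iff trzero_smul)
qed

section \<open>Derivations of the free associative algebra\<close>

definition der_word :: "ncs \<Rightarrow> ncs \<Rightarrow> letter list \<Rightarrow> ncs" where
  "der_word a b w = (\<lambda>v. \<Sum>i<length w. nmul (nmul (mono (take i w)) (if w ! i = X then a else b)) (mono (drop (Suc i) w)) v)"

lemma derA_linext: "derA a b g = linext (der_word a b) g"
  by (simp add: derA_def linext_def supp_def der_word_def)

lemma der_word_append: "der_word a b (x @ y) = nmul (der_word a b x) (mono y) + nmul (mono x) (der_word a b y)"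
proof
  fix v
  let ?K = "\<lambda>w i. (if w ! i = X then a else b)"
  have "der_word a b (x @ y) v = (\<Sum>i<length x. nmul (nmul (mono (take i (x@y))) (?K (x@y) i)) (mono (drop (Suc i) (x@y))) v)
     + (\<Sum>i<length y. nmul (nmul (mono (take (length x + i) (x@y))) (?K (x@y) (length x + i))) (mono (drop (Suc (length x + i)) (x@y))) v)"
    unfolding der_word_def by (simp add: sum_lessThan_add)
  also have "(\<Sum>i<length x. nmul (nmul (mono (take i (x@y))) (?K (x@y) i)) (mono (drop (Suc i) (x@y))) v)
      = (\<Sum>i<length x. nmul (nmul (nmul (mono (take i x)) (?K x i)) (mono (drop (Suc i) x))) (mono y) v)"
    by (intro sum.cong refl) (simp add: nth_append nmul_mono_mono[symmetric] nmul_assoc)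
  also have "\<dots> = nmul (der_word a b x) (mono y) v"
    unfolding der_word_def by (simp only: nmul_sum_left)
  also have "(\<Sum>i<length y. nmul (nmul (mono (take (length x + i) (x@y))) (?K (x@y) (length x + i))) (mono (drop (Suc (length x + i)) (x@y))) v)
      = (\<Sum>i<length y. nmul (mono x) (nmul (nmul (mono (take i y)) (?K y i)) (mono (drop (Suc i) y))) v)"
    by (intro sum.cong refl) (simp add: nth_append nmul_mono_mono[symmetric] nmul_assoc)
  also have "\<dots> = nmul (mono x) (der_word a b y) v"
    unfolding der_word_def by (simp only: nmul_sum_right)
  finally show "der_word a b (x @ y) v = (nmul (der_word a b x) (mono y) + nmul (mono x) (der_word a b y)) v" by simp
qed

lemma derA_nmul: assumes "p \<in> polys" "q \<in> polys"
  shows "derA a b (nmul p q) = nmul (derA a b p) q + nmul p (derA a b q)"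
  unfolding derA_linext linext_nmul[OF assms] nmul_linext_left[OF assms(2)] nmul_linext_right[OF assms(1)] der_word_append
  by (simp add: fun_eq_iff distrib_left sum.distrib)

lemma derA_add: "p \<in> polys \<Longrightarrow> q \<in> polys \<Longrightarrow> derA a b (p + q) = derA a b p + derA a b q"
  by (simp add: derA_linext linext_add)

lemma derA_diff: "p \<in> polys \<Longrightarrow> q \<in> polys \<Longrightarrow> derA a b (p - q) = derA a b p - derA a b q"
  by (simp add: derA_linext linext_diff)

lemma derA_smul: "p \<in> polys \<Longrightarrow> derA a b (smul c p) = smul c (derA a b p)"
  by (simp add: derA_linext linext_smul)

lemma derA_zero: "derA a b 0 = 0"
  by (simp add: derA_linext linext_zero)

lemma derA_bracket: assumes "p \<in> polys" "q \<in> polys"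
  shows "derA a b (bracket p q) = bracket (derA a b p) q + bracket p (derA a b q)"
  using assms
  by (simp add: bracket_def derA_diff polys_nmul derA_nmul nmul_diff_left nmul_diff_right)

lemma derA_gen: "derA a b (gen X) = a" "derA a b (gen Y) = b"
  by (simp_all add: derA_linext gen_def linext_mono der_word_def)

lemma derA_freeLie: assumes "a \<in> freeLie" "b \<in> freeLie" "l \<in> freeLie"
  shows "derA a b l \<in> freeLie"
  using assms(3)
proof (induction rule: freeLie.induct)
  case (fl_gen c) then show ?case using assms by (cases c) (simp_all add: derA_gen)
next
  case fl_zero then show ?case by (simp add: derA_zero freeLie.fl_zero)
next
  case (fl_add a' b') then show ?case by (simp add: derA_add freeLie_polys freeLie.fl_add)
next
  case (fl_smul a' c) then show ?case by (simp add: derA_smul freeLie_polys freeLie.fl_smul)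
next
  case (fl_bracket a' b') then show ?case
    by (simp add: derA_bracket freeLie_polys freeLie.fl_add freeLie.fl_bracket)
qed

section \<open>Cyclic derivatives\<close>

text \<open>
  For \<open>M = 1\<close> this is
  the cyclic derivative; the extra factor \<open>M\<close> is what makes the product rule
  \<open>dcyc_with_nmul\<close> expressible.
\<close>
definition dcyc_word :: "letter \<Rightarrow> ncs \<Rightarrow> letter list \<Rightarrow> ncs" where
  "dcyc_word c M w = (\<lambda>v. \<Sum>i<length w. if w ! i = c then nmul (nmul (mono (drop (Suc i) w)) M) (mono (take i w)) v else 0)"

definition dcyc_with :: "letter \<Rightarrow> ncs \<Rightarrow> ncs \<Rightarrow> ncs" where
  "dcyc_with c M g = linext (dcyc_word c M) g"

lemma dcyc_word_append: "dcyc_word c M (x @ y) = dcyc_word c (nmul (mono y) M) x + dcyc_word c (nmul M (mono x)) y"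
proof
  fix v
  let ?T = "\<lambda>w M i. if w ! i = c then nmul (nmul (mono (drop (Suc i) w)) M) (mono (take i w)) v else 0"
  have "dcyc_word c M (x @ y) v = (\<Sum>i<length x. ?T (x@y) M i) + (\<Sum>i<length y. ?T (x@y) M (length x + i))"
    unfolding dcyc_word_def by (simp add: sum_lessThan_add)
  also have "(\<Sum>i<length x. ?T (x@y) M i) = (\<Sum>i<length x. ?T x (nmul (mono y) M) i)"
    by (intro sum.cong refl) (simp add: nth_append nmul_mono_mono[symmetric] nmul_assoc)
  also have "(\<Sum>i<length y. ?T (x@y) M (length x + i)) = (\<Sum>i<length y. ?T y (nmul M (mono x)) i)"
    by (intro sum.cong refl) (simp add: nth_append nmul_mono_mono[symmetric] nmul_assoc)
  finally show "dcyc_word c M (x @ y) v = (dcyc_word c (nmul (mono y) M) x + dcyc_word c (nmul M (mono x)) y) v"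
    by (simp add: dcyc_word_def)
qed

lemma if_sum_distrib: "(if P then sum f I else 0) = sum (\<lambda>i. if P then f i else 0) I"
  by simp

lemma dcyc_word_sum: "dcyc_word c (\<lambda>v. \<Sum>i\<in>I. k i * A i v) w = (\<lambda>v. \<Sum>i\<in>I. k i * dcyc_word c (A i) w v)"
proof
  fix v
  have "dcyc_word c (\<lambda>v. \<Sum>i\<in>I. k i * A i v) w v = (\<Sum>j<length w. \<Sum>i\<in>I.
      if w ! j = c then k i * nmul (nmul (mono (drop (Suc j) w)) (A i)) (mono (take j w)) v else 0)"
    unfolding dcyc_word_def
    by (simp only: nmul_sum_left nmul_sum_right nmul_cmult_left nmul_cmult_right if_sum_distrib)
  also have "\<dots> = (\<Sum>i\<in>I. \<Sum>j<length w.
      if w ! j = c then k i * nmul (nmul (mono (drop (Suc j) w)) (A i)) (mono (take j w)) v else 0)"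
    by (rule sum.swap)
  also have "\<dots> = (\<Sum>i\<in>I. k i * dcyc_word c (A i) w v)"
    unfolding dcyc_word_def by (simp add: sum_distrib_left if_distrib[of "\<lambda>z. k _ * z"] cong: if_cong)
  finally show "dcyc_word c (\<lambda>v. \<Sum>i\<in>I. k i * A i v) w v = (\<Sum>i\<in>I. k i * dcyc_word c (A i) w v)" .
qed

lemma dcyc_word_diff: "dcyc_word c (M1 - M2) w = dcyc_word c M1 w - dcyc_word c M2 w"
  unfolding dcyc_word_def
  by (simp add: fun_eq_iff nmul_diff_left nmul_diff_right sum_subtractf[symmetric] if_distrib cong: if_cong)

lemma dcyc_word_polys: assumes "M \<in> polys" shows "dcyc_word c M w \<in> polys"
proof -
  have "dcyc_word c M w = (\<lambda>v. \<Sum>i<length w. (if w ! i = c then nmul (nmul (mono (drop (Suc i) w)) M) (mono (take i w)) else 0) v)"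
    by (auto simp: dcyc_word_def fun_eq_iff intro!: sum.cong)
  moreover have "(if w ! i = c then nmul (nmul (mono (drop (Suc i) w)) M) (mono (take i w)) else 0) \<in> polys" for i
    using assms by (simp add: polys_zero polys_nmul polys_mono)
  ultimately show ?thesis using polys_sum[of "{..<length w}"] by simp
qed

lemma dcyc_with_diff_inner: "dcyc_with c (M1 - M2) g = dcyc_with c M1 g - dcyc_with c M2 g"
  unfolding dcyc_with_def linext_def dcyc_word_diff by (simp add: fun_eq_iff right_diff_distrib sum_subtractf)

lemma dcyc_with_nmul: assumes "p \<in> polys" "q \<in> polys"
  shows "dcyc_with c M (nmul p q) = dcyc_with c (nmul q M) p + dcyc_with c (nmul M p) q"
proof -
  have q: "nmul q M = (\<lambda>v. \<Sum>y\<in>supp q. q y * nmul (mono y) M v)"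
    by (subst poly_eq_lincomb_mono[OF assms(2)]) (simp only: nmul_sum_left nmul_cmult_left)
  have p: "nmul M p = (\<lambda>v. \<Sum>x\<in>supp p. p x * nmul M (mono x) v)"
    by (subst poly_eq_lincomb_mono[OF assms(1)]) (simp only: nmul_sum_right nmul_cmult_right)
  show ?thesis
    unfolding dcyc_with_def linext_nmul[OF assms] dcyc_word_append q p dcyc_word_sum
    by (simp add: fun_eq_iff linext_def distrib_left sum.distrib sum_distrib_left mult.assoc mult.left_commute
        sum.swap[of _ "supp q"])
qed

lemma dcyc_with_gen: "dcyc_with c M (gen d) = (if d = c then M else 0)"
  by (simp add: dcyc_with_def gen_def linext_mono dcyc_word_def fun_eq_iff)

lemma dcyc_with_add: "a \<in> polys \<Longrightarrow> b \<in> polys \<Longrightarrow> dcyc_with c M (a + b) = dcyc_with c M a + dcyc_with c M b"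
  by (simp add: dcyc_with_def linext_add)

lemma dcyc_with_smul: "a \<in> polys \<Longrightarrow> dcyc_with c M (smul k a) = smul k (dcyc_with c M a)"
  by (simp add: dcyc_with_def linext_smul)

lemma dcyc_with_diff: "a \<in> polys \<Longrightarrow> b \<in> polys \<Longrightarrow> dcyc_with c M (a - b) = dcyc_with c M a - dcyc_with c M b"
  by (simp add: dcyc_with_def linext_diff)

lemma dcyc_with_zero: "dcyc_with c M 0 = 0"
  by (simp add: dcyc_with_def linext_zero)

lemma dcyc_with_freeLie: assumes "a \<in> freeLie" "M \<in> freeLie" shows "dcyc_with c M a \<in> freeLie"
  using assms
proof (induction arbitrary: M rule: freeLie.induct)
  case (fl_gen d) then show ?case by (simp add: dcyc_with_gen freeLie.fl_zero)
next
  case fl_zero then show ?case by (simp add: dcyc_with_zero freeLie.fl_zero)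
next
  case (fl_add a b) then show ?case by (simp add: dcyc_with_add freeLie_polys freeLie.fl_add)
next
  case (fl_smul a k) then show ?case by (simp add: dcyc_with_smul freeLie_polys freeLie.fl_smul)
next
  case (fl_bracket a b)
  have pa: "a \<in> polys" and pb: "b \<in> polys" using fl_bracket freeLie_polys by auto
  have "dcyc_with c M (bracket a b) = dcyc_with c (bracket b M) a - dcyc_with c (bracket a M) b"
    unfolding bracket_def dcyc_with_diff[OF polys_nmul[OF pa pb] polys_nmul[OF pb pa]]
      dcyc_with_nmul[OF pa pb] dcyc_with_nmul[OF pb pa] dcyc_with_diff_inner by simp
  moreover have "bracket b M \<in> freeLie" "bracket a M \<in> freeLie"
    using fl_bracket by (simp_all add: freeLie.fl_bracket)
  ultimately show ?case using fl_bracket by (simp add: freeLie_diff)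
qed

text \<open>Cutting \<open>w\<close> at an occurrence of \<open>c\<close> and reading it cyclically gives \<open>v\<close> exactly when
  \<open>w\<close> arises from \<open>v\<close> by inserting \<open>c\<close> and rotating.\<close>
lemma cyclic_cuts_eq:
  "{q \<in> Sigma S (\<lambda>w. {..<length w}).
      fst q ! snd q = c \<and> drop (Suc (snd q)) (fst q) @ take (snd q) (fst q) = v}
    = (\<lambda>k. (drop k v @ c # take k v, length v - k)) ` {k \<in> {..length v}. drop k v @ c # take k v \<in> S}"
proof (intro equalityI subsetI)
  fix q
  assume "q \<in> {q \<in> Sigma S (\<lambda>w. {..<length w}).
      fst q ! snd q = c \<and> drop (Suc (snd q)) (fst q) @ take (snd q) (fst q) = v}"
  then obtain w i where q: "q = (w, i)"
    and w: "w \<in> S" "i < length w" "w ! i = c" "drop (Suc i) w @ take i w = v" by auto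
  define k where "k = length w - Suc i"
  have lv: "length v = length w - 1" using w(2,4) by (auto dest: arg_cong[of _ _ length])
  have "drop k v = take i w" "take k v = drop (Suc i) w"
    using w(4) by (auto simp: k_def dest: sym)
  then have wk: "drop k v @ c # take k v = w"
    using w(2,3) id_take_nth_drop[OF w(2)] by simp
  moreover have "length v - k = i" "k \<le> length v" using lv w(2) by (simp_all add: k_def)
  ultimately show "q \<in> (\<lambda>k. (drop k v @ c # take k v, length v - k))
      ` {k \<in> {..length v}. drop k v @ c # take k v \<in> S}"
    using q w(1) by (auto intro: image_eqI[where x=k])
next
  fix q
  assume "q \<in> (\<lambda>k. (drop k v @ c # take k v, length v - k))
      ` {k \<in> {..length v}. drop k v @ c # take k v \<in> S}"
  then obtain k where "k \<le> length v" "drop k v @ c # take k v \<in> S"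
    and "q = (drop k v @ c # take k v, length v - k)" by auto
  then show "q \<in> {q \<in> Sigma S (\<lambda>w. {..<length w}).
      fst q ! snd q = c \<and> drop (Suc (snd q)) (fst q) @ take (snd q) (fst q) = v}"
    by (auto simp: nth_append)
qed

lemma dcyc_eq_dcyc_with_one:
  assumes "g \<in> polys"
  shows "dcyc c g = dcyc_with c (mono []) g"
proof
  fix v :: "letter list"
  let ?phi = "\<lambda>k. (drop k v @ c # take k v, length v - k)"
  let ?P = "\<lambda>q. fst q ! snd q = c \<and> drop (Suc (snd q)) (fst q) @ take (snd q) (fst q) = v"
  let ?Sig = "Sigma (supp g) (\<lambda>w. {..<length w})"
  let ?K = "{k \<in> {..length v}. drop k v @ c # take k v \<in> supp g}"
  have fin: "finite (supp g)" using assms by (simp add: polys_iff)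
  have "dcyc_with c (mono []) g v = (\<Sum>w\<in>supp g. \<Sum>i<length w. if ?P (w, i) then g w else 0)"
    unfolding dcyc_with_def linext_def dcyc_word_def nmul_one_right nmul_mono_mono
    by (simp add: sum_distrib_left mono_def if_distrib[of "\<lambda>z. g _ * z"] cong: if_cong)
       (intro sum.cong refl, auto)
  also have "\<dots> = (\<Sum>q\<in>?Sig. if ?P q then g (fst q) else 0)"
    using fin by (subst sum.Sigma) (auto simp: case_prod_beta)
  also have "\<dots> = (\<Sum>q\<in>{q\<in>?Sig. ?P q}. g (fst q))"
    using fin by (simp add: sum.inter_filter)
  also have "{q\<in>?Sig. ?P q} = ?phi ` ?K"
    by (rule cyclic_cuts_eq)
  also have "(\<Sum>q\<in>?phi ` ?K. g (fst q)) = (\<Sum>k\<in>?K. g (drop k v @ c # take k v))"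
  proof (subst sum.reindex)
    show "inj_on ?phi ?K" by (rule inj_onI) auto
  qed simp
  also have "\<dots> = (\<Sum>k\<le>length v. g (drop k v @ c # take k v))"
    by (rule sum.mono_neutral_left) (auto simp: supp_def)
  finally show "dcyc c g v = dcyc_with c (mono []) g v" by (simp add: dcyc_def)
qed

lemma polys_dcyc: "h \<in> polys \<Longrightarrow> dcyc c h \<in> polys"
  by (simp add: dcyc_eq_dcyc_with_one dcyc_with_def polys_linext dcyc_word_polys polys_mono)

lemma dcyc_nmul: assumes "p \<in> polys" "q \<in> polys"
  shows "dcyc c (nmul p q) = dcyc_with c q p + dcyc_with c p q"
  using assms by (simp add: dcyc_eq_dcyc_with_one polys_nmul dcyc_with_nmul)

lemma dcyc_nmul_freeLie: "a \<in> freeLie \<Longrightarrow> b \<in> freeLie \<Longrightarrow> dcyc c (nmul a b) \<in> freeLie"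
  by (simp add: dcyc_nmul freeLie_polys dcyc_with_freeLie freeLie.fl_add)

lemma dcyc_add: "dcyc c (a + b) = dcyc c a + dcyc c b"
  by (simp add: dcyc_def fun_eq_iff sum.distrib)

lemma dcyc_smul: "dcyc c (smul k a) = smul k (dcyc c a)"
  by (simp add: dcyc_def fun_eq_iff smul_def sum_distrib_left)

lemma dcyc_zero: "dcyc c 0 = 0"
  by (simp add: dcyc_def fun_eq_iff)

lemma dcyc_FLrep_freeLie: "g \<in> FLrep i j \<Longrightarrow> dcyc c g \<in> freeLie"
  unfolding FLrep_def
proof (induction rule: lspan.induct)
  case lspan_zero then show ?case by (simp add: dcyc_zero freeLie.fl_zero)
next
  case (lspan_base a) then show ?case by (auto intro: dcyc_nmul_freeLie)
next
  case (lspan_add a b) then show ?case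
    by (simp add: dcyc_add freeLie.fl_add) 
next
  case (lspan_smul a k) then show ?case by (simp add: dcyc_smul freeLie.fl_smul)
qed

lemma dcyc_eq_0_if_trzero: assumes "trzero h" shows "dcyc c h = 0"
proof -
  have "h \<in> polys \<and> dcyc_with c (mono []) h = 0"
    using assms unfolding trzero_def
  proof (induction rule: lspan.induct)
    case lspan_zero then show ?case by (simp add: polys_zero dcyc_with_zero)
  next
    case (lspan_base a)
    then obtain p q where a: "a = nmul p q - nmul q p" "p \<in> polys" "q \<in> polys" by auto
    then show ?case
      by (simp add: polys_diff polys_nmul dcyc_with_diff dcyc_with_nmul)
  next
    case (lspan_add a b) then show ?case by (simp add: polys_add dcyc_with_add)
  next
    case (lspan_smul a k) then show ?case by (simp add: polys_smul dcyc_with_smul smul_zero)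
  qed
  then show ?thesis by (simp add: dcyc_eq_dcyc_with_one)
qed

lemma drop_take_rotate: "m \<le> length v \<Longrightarrow> drop m v @ take m v = rotate m v"
  by (cases "m = length v") (simp_all add: rotate_drop_take)

lemma sum_lessThan_shift_periodic: "G n = G 0 \<Longrightarrow> (\<Sum>k<n. G (Suc k)) = (\<Sum>k<n. G k)"
  for G :: "nat \<Rightarrow> real"
  using sum.lessThan_Suc_shift[of G n] sum.lessThan_Suc[of G n] by simp

lemma dcyc_last: assumes "v \<noteq> []"
  shows "dcyc (last v) g (butlast v) = (\<Sum>k<length v. g (rotate k v))"
proof -
  let ?b = "butlast v"
  have vb: "v = ?b @ [last v]" using assms by simp
  have lb: "length ?b = length v - 1" by simp
  have "dcyc (last v) g ?b = (\<Sum>k\<le>length ?b. g (drop k ?b @ last v # take k ?b))" by (simp add: dcyc_def)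
  also have "\<dots> = (\<Sum>k<length v. g (rotate k v))"
  proof -
    have "length v = Suc (length ?b)" using assms by simp
    then have "{..length ?b} = {..<length v}" using lessThan_Suc_atMost by metis
    moreover have "g (drop k ?b @ last v # take k ?b) = g (rotate k v)" if "k < length v" for k
    proof -
      have k': "k \<le> length ?b" using that lb assms by (cases v) auto
      have "drop k (?b @ [last v]) = drop k ?b @ [last v]" "take k (?b @ [last v]) = take k ?b"
        using k' by simp_all
      then have "drop k v = drop k ?b @ [last v]" "take k v = take k ?b" using vb by metis+
      then show ?thesis using drop_take_rotate[of k v] that by simp
    qed
    ultimately show ?thesis by (auto intro!: sum.cong)
  qed
  finally show ?thesis .
qed

lemma dcyc_hd: assumes "v \<noteq> []"
  shows "dcyc (hd v) g (tl v) = (\<Sum>k<length v. g (rotate (Suc k) v))"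
proof -
  have vb: "v = hd v # tl v" using assms by simp
  have lv: "length v = Suc (length (tl v))" using assms by (cases v) auto
  have "dcyc (hd v) g (tl v) = (\<Sum>k\<le>length (tl v). g (drop k (tl v) @ hd v # take k (tl v)))"
    by (simp add: dcyc_def)
  also have "\<dots> = (\<Sum>k<length v. g (rotate (Suc k) v))"
  proof -
    have "{..length (tl v)} = {..<length v}" using lv lessThan_Suc_atMost by metis
    moreover have "g (drop k (tl v) @ hd v # take k (tl v)) = g (rotate (Suc k) v)" if "k < length v" for k
    proof -
      have "drop (Suc k) v = drop k (tl v)" "take (Suc k) v = hd v # take k (tl v)"
        using vb by (metis drop_Suc_Cons, metis take_Suc_Cons)
      then show ?thesis using drop_take_rotate[of "Suc k" v] that by simp
    qed
    ultimately show ?thesis by (auto intro!: sum.cong)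
  qed
  finally show ?thesis .
qed

lemma dcyc_commutator_sum_eq_0:
  "nmul (dcyc Y g) (gen Y) - nmul (gen Y) (dcyc Y g) + (nmul (dcyc X g) (gen X) - nmul (gen X) (dcyc X g)) = 0"
proof
  fix v :: "letter list"
  show "(nmul (dcyc Y g) (gen Y) - nmul (gen Y) (dcyc Y g) + (nmul (dcyc X g) (gen X) - nmul (gen X) (dcyc X g))) v = 0 v"
  proof (cases "v = []")
    case True then show ?thesis by (simp add: nmul_gen_left nmul_gen_right)
  next
    case False
    have A: "nmul (dcyc Y g) (gen Y) v + nmul (dcyc X g) (gen X) v = dcyc (last v) g (butlast v)"
      using letter_cases[of "last v"] False by (auto simp: nmul_gen_right)
    have B: "nmul (gen Y) (dcyc Y g) v + nmul (gen X) (dcyc X g) v = dcyc (hd v) g (tl v)"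
      using letter_cases[of "hd v"] False by (auto simp: nmul_gen_left)
    have "dcyc (last v) g (butlast v) = dcyc (hd v) g (tl v)"
      unfolding dcyc_last[OF False] dcyc_hd[OF False]
      by (rule sum_lessThan_shift_periodic[symmetric]) simp
    then show ?thesis using A B by simp
  qed
qed

section \<open>Bidegrees\<close>

lemma homog_zero: "homog p q 0" by (simp add: homog_def)

lemma homog_add: "homog p q a \<Longrightarrow> homog p q b \<Longrightarrow> homog p q (a + b)"
  by (auto simp: homog_def) (metis add.right_neutral)+

lemma homog_smul: "homog p q a \<Longrightarrow> homog p q (smul c a)"
  by (auto simp: homog_def smul_def)

lemma homog_uminus: "homog p q a \<Longrightarrow> homog p q (- a)"
  by (auto simp: homog_def)

lemma homog_mono: "homog (int (count_list w X)) (int (count_list w Y)) (mono w)"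
  by (simp add: homog_def mono_def)

lemma homog_genX: "homog 1 0 (gen X)" by (simp add: homog_def gen_def mono_def)

lemma homog_genY: "homog 0 1 (gen Y)" by (simp add: homog_def gen_def mono_def)

lemma homog_nmul: assumes "homog p1 q1 a" "homog p2 q2 b"
  shows "homog (p1 + p2) (q1 + q2) (nmul a b)"
  unfolding homog_def
proof (intro allI impI)
  fix w assume "nmul a b w \<noteq> 0"
  then obtain k where "a (take k w) * b (drop k w) \<noteq> 0"
    unfolding nmul_def by (meson sum.neutral)
  then have "a (take k w) \<noteq> 0" "b (drop k w) \<noteq> 0" by auto
  with assms have "int (count_list (take k w) X) = p1" "int (count_list (take k w) Y) = q1"
    "int (count_list (drop k w) X) = p2" "int (count_list (drop k w) Y) = q2"
    by (auto simp: homog_def)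
  moreover have "count_list w c = count_list (take k w) c + count_list (drop k w) c" for c
    by (metis append_take_drop_id count_list_append)
  ultimately show "int (count_list w X) = p1 + p2 \<and> int (count_list w Y) = q1 + q2" by simp
qed

lemma homog_sum: "(\<And>i. i \<in> I \<Longrightarrow> homog p q (f i)) \<Longrightarrow> homog p q (\<lambda>v. \<Sum>i\<in>I. f i v)"
  unfolding homog_def by (metis (mono_tags, lifting) sum.neutral)

lemma homog_linext: "(\<And>w. w \<in> supp g \<Longrightarrow> homog p q (f w)) \<Longrightarrow> homog p q (linext f g)"
  unfolding linext_def
  by (rule homog_sum[where f = "\<lambda>w v. g w * f w v", simplified]) (auto simp: homog_def)

lemma homog_lspan: assumes "\<And>a. a \<in> S \<Longrightarrow> homog p q a" "a \<in> lspan S" shows "homog p q a"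
  using assms(2) by (induction rule: lspan.induct) (auto simp: assms(1) homog_zero homog_add homog_smul)

lemma FLrep_homog: "g \<in> FLrep i j \<Longrightarrow> homog (int i) (int j) g"
  unfolding FLrep_def by (erule homog_lspan[rotated]) (auto dest: homog_nmul)

lemma homog_len: "homog p q a \<Longrightarrow> w \<in> supp a \<Longrightarrow> int (length w) = p + q"
  by (auto simp: homog_def supp_def length_count)

lemma homog2_length: "homog 2 (int j) F \<Longrightarrow> \<forall>w\<in>supp F. length w = j + 2"
  using homog_len by fastforce

lemma dcyc_homog: assumes "homog p q g"
  shows "homog (p - 1) q (dcyc X g)" "homog p (q - 1) (dcyc Y g)"
proof -
  have cnt: "count_list (drop k v @ c # take k v) d = count_list v d + (if c = d then 1 else 0)" for k v c d
    using count_list_append[of "take k v" "drop k v" d] by simp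
  have ex: "dcyc c g v \<noteq> 0 \<Longrightarrow> \<exists>k. g (drop k v @ c # take k v) \<noteq> 0" for c v
    unfolding dcyc_def by (meson sum.neutral)
  show "homog (p - 1) q (dcyc X g)" unfolding homog_def
  proof (intro allI impI)
    fix w assume "dcyc X g w \<noteq> 0"
    then obtain k where "g (drop k w @ X # take k w) \<noteq> 0" using ex by blast
    then show "int (count_list w X) = p - 1 \<and> int (count_list w Y) = q"
      using assms cnt[of k w X X] cnt[of k w X Y] unfolding homog_def by force
  qed
  show "homog p (q - 1) (dcyc Y g)" unfolding homog_def
  proof (intro allI impI)
    fix w assume "dcyc Y g w \<noteq> 0"
    then obtain k where "g (drop k w @ Y # take k w) \<noteq> 0" using ex by blast
    then show "int (count_list w X) = p \<and> int (count_list w Y) = q - 1"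
      using assms cnt[of k w Y X] cnt[of k w Y Y] unfolding homog_def by force
  qed
qed

lemma der_word_homog: assumes "homog (1 + dp) dq a" "homog dp (1 + dq) b"
  shows "homog (int (count_list w X) + dp) (int (count_list w Y) + dq) (der_word a b w)"
  unfolding der_word_def
proof (rule homog_sum)
  fix i assume "i \<in> {..<length w}"
  then have i: "i < length w" by simp
  show "homog (int (count_list w X) + dp) (int (count_list w Y) + dq)
    (nmul (nmul (mono (take i w)) (if w ! i = X then a else b)) (mono (drop (Suc i) w)))"
  proof (cases "w ! i = X")
    case True
    have "homog (int (count_list (take i w) X) + (1 + dp) + int (count_list (drop (Suc i) w) X))
         (int (count_list (take i w) Y) + dq + int (count_list (drop (Suc i) w) Y))
         (nmul (nmul (mono (take i w)) a) (mono (drop (Suc i) w)))"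
      by (intro homog_nmul homog_mono assms)
    then show ?thesis using True count_split[OF i, of X] count_split[OF i, of Y]
      by (simp add: algebra_simps)
  next
    case False
    then have "w ! i = Y" using letter_cases by blast
    have "homog (int (count_list (take i w) X) + dp + int (count_list (drop (Suc i) w) X))
         (int (count_list (take i w) Y) + (1 + dq) + int (count_list (drop (Suc i) w) Y))
         (nmul (nmul (mono (take i w)) b) (mono (drop (Suc i) w)))"
      by (intro homog_nmul homog_mono assms)
    then show ?thesis using False \<open>w ! i = Y\<close> count_split[OF i, of X] count_split[OF i, of Y]
      by (simp add: algebra_simps)
  qed
qed

lemma derA_homog: assumes "homog (1 + dp) dq a" "homog dp (1 + dq) b" "homog p q l"
  shows "homog (p + dp) (q + dq) (derA a b l)"
  unfolding derA_linext
proof (rule homog_linext)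
  fix w assume "w \<in> supp l"
  then have "int (count_list w X) = p" "int (count_list w Y) = q"
    using assms(3) by (auto simp: homog_def supp_def)
  then show "homog (p + dp) (q + dq) (der_word a b w)" using der_word_homog[OF assms(1,2), of w] by simp
qed

definition xhomog :: "nat \<Rightarrow> ncs \<Rightarrow> bool" where
  "xhomog k a \<longleftrightarrow> (\<forall>w. a w \<noteq> 0 \<longrightarrow> count_list w X = k)"

lemma homog_imp_xhomog: "homog (int k) q a \<Longrightarrow> xhomog k a" by (auto simp: homog_def xhomog_def)

lemma xhomog_add: "xhomog k a \<Longrightarrow> xhomog k b \<Longrightarrow> xhomog k (a + b)"
  by (auto simp: xhomog_def) (metis add.right_neutral)+

lemma xhomog_smul: "xhomog k a \<Longrightarrow> xhomog k (smul c a)" by (auto simp: xhomog_def smul_def)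

lemma xhomog_diff: "xhomog k a \<Longrightarrow> xhomog k b \<Longrightarrow> xhomog k (a - b)"
  by (auto simp: xhomog_def) (metis diff_zero)+

lemma xhomog_genX: "xhomog 1 (gen X)" by (simp add: xhomog_def gen_def mono_def)

lemma xhomog_genY: "xhomog 0 (gen Y)" by (simp add: xhomog_def gen_def mono_def)

lemma xhomog_nmul: assumes "xhomog k a" "xhomog m b" shows "xhomog (k + m) (nmul a b)"
  unfolding xhomog_def
proof (intro allI impI)
  fix w assume "nmul a b w \<noteq> 0"
  then obtain l where "a (take l w) * b (drop l w) \<noteq> 0"
    unfolding nmul_def by (meson sum.neutral)
  then have "count_list (take l w) X = k" "count_list (drop l w) X = m"
    using assms by (auto simp: xhomog_def)
  moreover have "count_list w X = count_list (take l w) X + count_list (drop l w) X"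
    by (metis append_take_drop_id count_list_append)
  ultimately show "count_list w X = k + m" by simp
qed

lemma xhomog_dcyc_X: assumes "xhomog (Suc k) h" shows "xhomog k (dcyc X h)"
  unfolding xhomog_def
proof (intro allI impI)
  fix v assume "dcyc X h v \<noteq> 0"
  then obtain l where "h (drop l v @ X # take l v) \<noteq> 0" unfolding dcyc_def by (meson sum.neutral)
  then have "count_list (drop l v @ X # take l v) X = Suc k" using assms unfolding xhomog_def by blast
  moreover have "count_list v X = count_list (take l v) X + count_list (drop l v) X"
    by (metis append_take_drop_id count_list_append)
  then have "count_list (drop l v @ X # take l v) X = Suc (count_list v X)"
    by (simp add: count_list_append)
  ultimately show "count_list v X = k" by simp
qed

lemma dL_eq: "dL c l = (\<lambda>p. l (p @ [c]))"
  by (simp add: dL_def dA_def)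

lemma snoc_polys: assumes "H \<in> polys" shows "(\<lambda>p. H (p @ [c])) \<in> polys"
proof -
  have "supp (\<lambda>p. H (p @ [c])) \<subseteq> (\<lambda>p. p @ [c]) -` supp H" by (auto simp: supp_def)
  moreover have "finite ((\<lambda>p. p @ [c]) -` supp H)"
    using assms by (intro finite_vimageI) (auto simp: polys_iff inj_def)
  ultimately show ?thesis by (simp add: polys_iff finite_subset)
qed

lemma dL_polys: "H \<in> polys \<Longrightarrow> dL c H \<in> polys"
  unfolding dL_eq by (rule snoc_polys)

lemma xhomog_dL: "xhomog (Suc k) G \<Longrightarrow> xhomog k (dL X G)" "xhomog k F \<Longrightarrow> xhomog k (dL Y F)"
  by (auto simp: xhomog_def dL_eq count_list_append)

section \<open>Derivations of the free Lie algebra\<close>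

lemma DerL_zero: assumes "D \<in> DerL" shows "D 0 = 0"
proof -
  have "D (0 + 0) = D 0 + D 0" using assms freeLie.fl_zero unfolding DerL_def by blast
  then show ?thesis by simp
qed

lemma DerL_unique: assumes "D1 \<in> DerL" "D2 \<in> DerL" "D1 (gen X) = D2 (gen X)" "D1 (gen Y) = D2 (gen Y)"
  shows "D1 = D2"
proof
  fix l
  show "D1 l = D2 l"
  proof (cases "l \<in> freeLie")
    case True then show ?thesis
    proof (induction rule: freeLie.induct)
      case (fl_gen c) then show ?case using assms letter_cases[of c] by auto
    next
      case fl_zero then show ?case using DerL_zero assms by simp
    next
      case (fl_add a b) then show ?case using assms unfolding DerL_def by simp
    next
      case (fl_smul a c) then show ?case using assms unfolding DerL_def by simp
    next
      case (fl_bracket a b) then show ?case using assms unfolding DerL_def by simp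
    qed
  next
    case False then show ?thesis using assms unfolding DerL_def by simp
  qed
qed

lemma DerL_bracket_xy: "D \<in> DerL \<Longrightarrow>
   D (bracket (gen X) (gen Y)) = bracket (D (gen X)) (gen Y) + bracket (gen X) (D (gen Y))"
  unfolding DerL_def using freeLie.fl_gen by blast

lemma zero_DerL: "(\<lambda>l. 0) \<in> DerL"
  unfolding DerL_def by (simp add: freeLie.fl_zero smul_zero bracket_def)

lemma zero_krv: "(\<lambda>l. 0) \<in> krv i j"
  unfolding krv_def using zero_DerL
  by (simp add: divg_def dL_eq trzero_zero homog_zero)

lemma uGamma_DerL: assumes "g \<in> FLrep i j" shows "uGamma g \<in> DerL"
proof -
  let ?a = "dcyc Y g" and ?b = "- dcyc X g"
  have a: "?a \<in> freeLie" and b: "?b \<in> freeLie"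
    using dcyc_FLrep_freeLie[OF assms] freeLie_uminus by auto
  show ?thesis unfolding DerL_def uGamma_def
    using derA_freeLie[OF a b] a b
    by (auto simp: freeLie.fl_add freeLie.fl_smul freeLie.fl_bracket derA_add derA_smul derA_bracket freeLie_polys)
qed

lemma uGamma_gen: "uGamma g (gen X) = dcyc Y g" "uGamma g (gen Y) = - dcyc X g"
  by (simp_all add: uGamma_def freeLie.fl_gen derA_gen)

lemma uGamma_xy: assumes "g \<in> FLrep i j" shows "uGamma g (bracket (gen X) (gen Y)) = 0"
proof -
  have "uGamma g (bracket (gen X) (gen Y)) = bracket (dcyc Y g) (gen Y) + bracket (gen X) (- dcyc X g)"
    using DerL_bracket_xy[OF uGamma_DerL[OF assms]] uGamma_gen by simp
  also have "\<dots> = 0" using dcyc_commutator_sum_eq_0[of g]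
    by (simp add: bracket_def nmul_uminus_left nmul_uminus_right algebra_simps)
  finally show ?thesis .
qed

section \<open>Commutative evaluation\<close>

text \<open>
  \<open>cmon\<close> sends \<open>y^a0 x y^a1 ... x y^ak\<close> to \<open>t 0 ^ a0 * ... * t k ^ ak\<close>: every \<open>x\<close>
  moves on to the next variable.
\<close>
fun cmon :: "letter list \<Rightarrow> (nat \<Rightarrow> real) \<Rightarrow> real" where
  "cmon [] t = 1"
| "cmon (Y # w) t = t 0 * cmon w t"
| "cmon (X # w) t = cmon w (\<lambda>i. t (Suc i))"

definition shift :: "nat \<Rightarrow> (nat \<Rightarrow> real) \<Rightarrow> nat \<Rightarrow> real" where
  "shift k t = (\<lambda>i. t (i + k))"

definition ceval :: "ncs \<Rightarrow> (nat \<Rightarrow> real) \<Rightarrow> real" where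
  "ceval a t = (\<Sum>w\<in>supp a. a w * cmon w t)"

lemma shift0[simp]: "shift 0 t = t" by (simp add: shift_def)

lemma cmon_append: "cmon (u @ w) t = cmon u t * cmon w (shift (count_list u X) t)"
proof (induction u arbitrary: t)
  case Nil then show ?case by simp
next
  case (Cons c u)
  show ?case
  proof (cases c)
    case X
    have "shift (count_list u X) (\<lambda>i. t (Suc i)) = shift (count_list (c # u) X) t"
      using X by (simp add: shift_def)
    then show ?thesis using X Cons[of "\<lambda>i. t (Suc i)"] by simp
  next
    case Y
    then show ?thesis using Cons[of t] by simp
  qed
qed

lemma cmon_cong: "(\<And>i. i \<le> count_list w X \<Longrightarrow> t i = t' i) \<Longrightarrow> cmon w t = cmon w t'"
proof (induction w arbitrary: t t')
  case Nil then show ?case by simp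
next
  case (Cons c w)
  show ?case
  proof (cases c)
    case X
    have "cmon w (\<lambda>i. t (Suc i)) = cmon w (\<lambda>i. t' (Suc i))"
      by (rule Cons.IH) (use Cons.prems X in simp)
    then show ?thesis using X by simp
  next
    case Y
    have "cmon w t = cmon w t'" by (rule Cons.IH) (use Cons.prems Y in simp)
    moreover have "t 0 = t' 0" using Cons.prems by simp
    ultimately show ?thesis using Y by simp
  qed
qed

lemma cmon_replicate_Y: "cmon (replicate n Y) t = t 0 ^ n"
  by (induction n) simp_all

lemma cmon_replicate_Y_X: "cmon (replicate a Y @ X # r) t = t 0 ^ a * cmon r (\<lambda>i. t (Suc i))"
  by (simp add: cmon_append cmon_replicate_Y count_X_replicate_Y)

lemma ceval_as_linext: "ceval a t = linext (\<lambda>w v. cmon w t) a []"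
  by (simp add: ceval_def linext_def)

lemma ceval_superset: "finite S \<Longrightarrow> supp a \<subseteq> S \<Longrightarrow> ceval a t = (\<Sum>w\<in>S. a w * cmon w t)"
  unfolding ceval_def by (rule sum.mono_neutral_left) (auto simp: supp_def)

lemma ceval_add: "a \<in> polys \<Longrightarrow> b \<in> polys \<Longrightarrow> ceval (a + b) t = ceval a t + ceval b t"
  by (simp add: ceval_as_linext linext_add)

lemma ceval_diff: "a \<in> polys \<Longrightarrow> b \<in> polys \<Longrightarrow> ceval (a - b) t = ceval a t - ceval b t"
  by (simp add: ceval_as_linext linext_diff)

lemma ceval_smul: assumes "a \<in> polys" shows "ceval (smul c a) t = c * ceval a t"
  using linext_smul[OF assms, of "\<lambda>w v. cmon w t" c] unfolding ceval_as_linext smul_def by simp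

lemma ceval_zero: "ceval 0 t = 0"
  by (simp add: ceval_as_linext linext_zero)

lemma ceval_mono: "ceval (mono w) t = cmon w t"
  by (simp add: ceval_as_linext linext_mono)

lemma ceval_genX: "ceval (gen X) t = 1" by (simp add: gen_def ceval_mono)

lemma ceval_genY: "ceval (gen Y) t = t 0" by (simp add: gen_def ceval_mono)

lemma ceval_cong: "xhomog k a \<Longrightarrow> (\<And>i. i \<le> k \<Longrightarrow> t i = t' i) \<Longrightarrow> ceval a t = ceval a t'"
  unfolding ceval_def by (intro sum.cong refl) (auto simp: xhomog_def supp_def intro!: cmon_cong)

lemma ceval_nmul: assumes "p \<in> polys" "q \<in> polys" "xhomog k p"
  shows "ceval (nmul p q) t = ceval p t * ceval q (shift k t)"
proof -
  have "ceval (nmul p q) t = (\<Sum>x\<in>supp p. \<Sum>y\<in>supp q. p x * q y * cmon (x @ y) t)"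
    unfolding ceval_as_linext linext_nmul[OF assms(1,2)] by simp
  also have "\<dots> = (\<Sum>x\<in>supp p. \<Sum>y\<in>supp q. (p x * cmon x t) * (q y * cmon y (shift k t)))"
    using assms(3) by (intro sum.cong refl) (simp add: cmon_append xhomog_def supp_def)
  also have "\<dots> = ceval p t * ceval q (shift k t)"
    by (simp add: ceval_def sum_product)
  finally show ?thesis .
qed

lemma ceval_sum:
  assumes "finite I" "\<And>i. i \<in> I \<Longrightarrow> f i \<in> polys"
  shows "ceval (\<lambda>v. \<Sum>i\<in>I. f i v) t = (\<Sum>i\<in>I. ceval (f i) t)"
  using assms
proof (induction I rule: finite_induct)
  case (insert x I)
  have "(\<lambda>v. \<Sum>i\<in>insert x I. f i v) = f x + (\<lambda>v. \<Sum>i\<in>I. f i v)"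
    using insert by (simp add: fun_eq_iff)
  then show ?case using insert by (simp add: ceval_add polys_sum)
qed (simp add: ceval_zero)

lemma ceval_linext_poly: assumes "h \<in> polys" "\<And>w. w \<in> supp h \<Longrightarrow> f w \<in> polys"
  shows "ceval (linext f h) t = (\<Sum>w\<in>supp h. h w * ceval (f w) t)"
proof -
  have fin: "finite (supp h)" using assms by (simp add: polys_iff)
  have "linext f h = (\<lambda>v. \<Sum>w\<in>supp h. smul (h w) (f w) v)" by (simp add: linext_def smul_def)
  then have "ceval (linext f h) t = (\<Sum>w\<in>supp h. ceval (smul (h w) (f w)) t)"
    using ceval_sum[OF fin, of "\<lambda>w. smul (h w) (f w)"] assms polys_smul by simp
  also have "\<dots> = (\<Sum>w\<in>supp h. h w * ceval (f w) t)"
    using assms by (intro sum.cong refl) (simp add: ceval_smul)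
  finally show ?thesis .
qed

lemma supp_length_bounded:
  assumes "a \<in> polys"
  obtains N where "\<And>w. w \<in> supp a \<Longrightarrow> length w \<le> N"
  using assms finite_nat_set_iff_bounded_le[THEN iffD1, OF finite_imageI[of "supp a" length]]
  by (auto simp: polys_iff)

lemma ceval_xhomog_0:
  assumes "a \<in> polys" "xhomog 0 a" "\<And>w. w \<in> supp a \<Longrightarrow> length w \<le> N"
  shows "ceval a t = (\<Sum>n\<le>N. a (replicate n Y) * t 0 ^ n)"
proof -
  have "supp a \<subseteq> (\<lambda>n. replicate n Y) ` {..N}"
  proof
    fix w assume w: "w \<in> supp a"
    then have "w = replicate (length w) Y"
      using assms(2) by (intro no_X_imp_replicate_Y) (simp add: xhomog_def supp_def)
    then show "w \<in> (\<lambda>n. replicate n Y) ` {..N}" using assms(3)[OF w] by blast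
  qed
  then have "ceval a t = (\<Sum>w\<in>(\<lambda>n. replicate n Y) ` {..N}. a w * cmon w t)"
    by (intro ceval_superset) auto
  also have "\<dots> = (\<Sum>n\<le>N. a (replicate n Y) * cmon (replicate n Y) t)"
  proof (rule sum.reindex[unfolded comp_def])
    show "inj_on (\<lambda>n. replicate n Y) {..N}" by (rule inj_onI) (metis length_replicate)
  qed
  finally show ?thesis by (simp add: cmon_replicate_Y)
qed

definition yx_slice :: "nat \<Rightarrow> ncs \<Rightarrow> ncs" where
  "yx_slice n a = (\<lambda>w. a (replicate n Y @ X # w))"

lemma polys_yx_slice: "a \<in> polys \<Longrightarrow> yx_slice n a \<in> polys"
proof -
  assume "a \<in> polys"
  moreover have "inj (\<lambda>w. replicate n Y @ X # w)" by (rule injI) (metis replicate_Y_X_inj)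
  ultimately have "finite ((\<lambda>w. replicate n Y @ X # w) -` supp a)"
    by (simp add: polys_iff finite_vimageI)
  moreover have "supp (yx_slice n a) \<subseteq> (\<lambda>w. replicate n Y @ X # w) -` supp a"
    by (auto simp: supp_def yx_slice_def)
  ultimately show ?thesis by (simp add: polys_iff finite_subset)
qed

lemma xhomog_yx_slice: "xhomog (Suc k) a \<Longrightarrow> xhomog k (yx_slice n a)"
  by (auto simp: xhomog_def yx_slice_def count_list_append count_X_replicate_Y)

lemma yx_slices_zero_imp_zero:
  assumes "xhomog (Suc k) a" "\<And>n. yx_slice n a = 0"
  shows "a = 0"
proof
  fix w
  show "a w = 0 w"
  proof (rule ccontr)
    assume aw: "a w \<noteq> 0 w"
    then have "X \<in> set w"
      using assms(1) count_X_eq_0_iff[of w] by (auto simp: xhomog_def)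
    then obtain n v where "w = replicate n Y @ X # v" using split_first_X by blast
    then have "a w = yx_slice n a v" by (simp add: yx_slice_def)
    then show False using aw assms(2) by simp
  qed
qed

lemma ceval_xhomog_Suc:
  assumes "a \<in> polys" "xhomog (Suc k) a" "\<And>w. w \<in> supp a \<Longrightarrow> length w \<le> N"
  shows "ceval a t = (\<Sum>n\<le>N. ceval (yx_slice n a) (\<lambda>i. t (Suc i)) * t 0 ^ n)"
proof -
  define phi where "phi = (\<lambda>(n, w). replicate n Y @ X # w)"
  let ?Sig = "Sigma {..N} (\<lambda>n. supp (yx_slice n a))"
  have inj: "inj_on phi ?Sig" by (rule inj_onI) (auto simp: phi_def dest: replicate_Y_X_inj)
  have img: "phi ` ?Sig = supp a"
  proof (intro equalityI subsetI)
    fix w assume w: "w \<in> supp a"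
    then have "X \<in> set w"
      using assms(2) count_X_eq_0_iff[of w] by (auto simp: xhomog_def supp_def)
    then obtain n v where wv: "w = replicate n Y @ X # v" using split_first_X by blast
    then have "(n, v) \<in> ?Sig" using w assms(3)[OF w] by (simp add: supp_def yx_slice_def)
    then show "w \<in> phi ` ?Sig" using wv by (force simp: phi_def)
  qed (auto simp: phi_def supp_def yx_slice_def)
  have "ceval a t = (\<Sum>q\<in>?Sig. a (phi q) * cmon (phi q) t)"
    unfolding ceval_def img[symmetric] by (simp add: sum.reindex[OF inj])
  also have "\<dots> = (\<Sum>(n, w)\<in>?Sig. yx_slice n a w * (t 0 ^ n * cmon w (\<lambda>i. t (Suc i))))"
    by (intro sum.cong refl) (auto simp: phi_def yx_slice_def cmon_replicate_Y_X)
  also have "\<dots> = (\<Sum>n\<le>N. \<Sum>w\<in>supp (yx_slice n a). yx_slice n a w * (t 0 ^ n * cmon w (\<lambda>i. t (Suc i))))"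
    using polys_yx_slice[OF assms(1)] by (subst sum.Sigma) (auto simp: polys_iff)
  also have "\<dots> = (\<Sum>n\<le>N. ceval (yx_slice n a) (\<lambda>i. t (Suc i)) * t 0 ^ n)"
    unfolding ceval_def sum_distrib_right by (intro sum.cong refl) (simp add: ac_simps)
  finally show ?thesis .
qed

lemma xhomog0_ceval_eq_0_imp_0:
  assumes "a \<in> polys" "xhomog 0 a" "\<And>t. ceval a t = 0"
  shows "a = 0"
proof
  obtain N where N: "\<And>w. w \<in> supp a \<Longrightarrow> length w \<le> N"
    using supp_length_bounded[OF assms(1)] by blast
  have "(\<Sum>n\<le>N. a (replicate n Y) * z ^ n) = 0" for z :: real
    using ceval_xhomog_0[OF assms(1,2) N, of "\<lambda>_. z"] assms(3)[of "\<lambda>_. z"] by simp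
  then have coeff: "a (replicate n Y) = 0" if "n \<le> N" for n
    using polyfun_eq_0[where n=N and c="\<lambda>n. a (replicate n Y)"] that by blast
  fix w
  show "a w = 0 w"
  proof (rule ccontr)
    assume "a w \<noteq> 0 w"
    then have w: "w \<in> supp a" by (simp add: supp_def)
    then have "w = replicate (length w) Y"
      using assms(2) by (intro no_X_imp_replicate_Y) (simp add: xhomog_def supp_def)
    then show False using coeff[OF N[OF w]] w by (simp add: supp_def)
  qed
qed

lemma ceval_yx_slice_eq_0:
  assumes "a \<in> polys" "xhomog (Suc k) a" "\<And>t. ceval a t = 0"
  shows "ceval (yx_slice n a) s = 0"
proof -
  obtain N0 where "\<And>w. w \<in> supp a \<Longrightarrow> length w \<le> N0"
    using supp_length_bounded[OF assms(1)] by blast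
  then have N: "\<And>w. w \<in> supp a \<Longrightarrow> length w \<le> max N0 n" by fastforce
  have "(\<Sum>m\<le>max N0 n. ceval (yx_slice m a) s * z ^ m) = 0" for z :: real
  proof -
    define t where "t = (\<lambda>i. case i of 0 \<Rightarrow> z | Suc i \<Rightarrow> s i)"
    have "(\<lambda>i. t (Suc i)) = s" "t 0 = z" by (simp_all add: t_def)
    then show ?thesis using ceval_xhomog_Suc[OF assms(1,2) N, of t] assms(3)[of t] by simp
  qed
  then show ?thesis
    using polyfun_eq_0[where n="max N0 n" and c="\<lambda>m. ceval (yx_slice m a) s"] by simp
qed

lemma ceval_eq_0_imp_0:
  assumes "a \<in> polys" "xhomog k a" "\<And>t. ceval a t = 0"
  shows "a = 0"
  using assms
proof (induction k arbitrary: a)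
  case 0
  then show ?case by (rule xhomog0_ceval_eq_0_imp_0)
next
  case (Suc k)
  have "yx_slice n a = 0" for n
    using Suc.IH[OF polys_yx_slice[OF Suc.prems(1)] xhomog_yx_slice[OF Suc.prems(2)]]
      ceval_yx_slice_eq_0[OF Suc.prems] by blast
  then show ?case by (rule yx_slices_zero_imp_zero[OF Suc.prems(2)])
qed

lemma ceval_inj:
  assumes "a \<in> polys" "b \<in> polys" "xhomog k a" "xhomog k b" "\<And>t. ceval a t = ceval b t"
  shows "a = b"
  using ceval_eq_0_imp_0[of "a - b" k] assms by (simp add: polys_diff xhomog_diff ceval_diff)

text \<open>\<open>y Q y\<close> evaluates to \<open>t 0 * ceval Q t * t 1\<close>.\<close>
lemma xhomog1_eq_0_if_ceval_YQY: assumes "Q \<in> polys" "xhomog 1 Q" "\<And>t. t 0 * ceval Q t * t 1 = 0" shows "Q = 0"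
proof -
  let ?E = "nmul (gen Y) (nmul Q (gen Y))"
  have pE: "nmul Q (gen Y) \<in> polys" "?E \<in> polys" using assms by (simp_all add: polys_nmul polys_gen)
  have "ceval ?E t = t 0 * (ceval Q t * t 1)" for t
    using assms pE
    by (simp add: ceval_nmul[OF polys_gen _ xhomog_genY] ceval_nmul[OF _ polys_gen assms(2)] ceval_genY shift_def)
  then have "?E = 0"
    using ceval_eq_0_imp_0[OF pE(2), of 1] xhomog_nmul[OF xhomog_genY xhomog_nmul[OF assms(2) xhomog_genY]] assms(3)
    by (simp add: mult.assoc)
  show ?thesis
  proof
    fix v
    have "?E (Y # (v @ [Y])) = Q v" by (simp add: nmul_gen_left nmul_gen_right butlast_append)
    then show "Q v = 0 v" using \<open>?E = 0\<close> by simp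
  qed
qed

section \<open>Evaluation of Lie elements\<close>

definition antipodal :: "ncs \<Rightarrow> bool" where
  "antipodal a \<longleftrightarrow> (\<forall>w. a (rev w) = - ((-1) ^ length w) * a w)"

lemma antipodal_nmul: assumes "antipodal a" "antipodal b"
  shows "nmul a b (rev w) = (-1) ^ length w * nmul b a w"
proof -
  let ?n = "length w"
  have "nmul a b (rev w) = (\<Sum>k\<le>?n. a (rev (drop (?n - k) w)) * b (rev (take (?n - k) w)))"
    by (simp add: nmul_def take_rev drop_rev)
  also have "\<dots> = (\<Sum>m\<le>?n. a (rev (drop m w)) * b (rev (take m w)))"
    by (subst sum_atMost_flip) (intro sum.cong refl, simp)
  also have "\<dots> = (\<Sum>m\<le>?n. (-1) ^ ?n * (b (take m w) * a (drop m w)))"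
  proof (intro sum.cong refl)
    fix m assume "m \<in> {..?n}"
    then have "(-1::real) ^ (?n - m) * (-1) ^ m = (-1) ^ ?n" by (simp add: power_add[symmetric])
    then show "a (rev (drop m w)) * b (rev (take m w)) = (-1) ^ ?n * (b (take m w) * a (drop m w))"
      using assms unfolding antipodal_def by (simp add: min_def)
  qed
  also have "\<dots> = (-1) ^ ?n * nmul b a w"
    by (simp add: nmul_def sum_distrib_left)
  finally show ?thesis .
qed

lemma freeLie_antipodal: "l \<in> freeLie \<Longrightarrow> antipodal l"
proof (induction rule: freeLie.induct)
  case (fl_gen c) then show ?case
  proof -
    have "rev w = [c] \<longleftrightarrow> w = [c]" for w by (metis rev_rev_ident rev_singleton_conv)
    then show ?thesis unfolding antipodal_def gen_def mono_def by auto
  qed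
next
  case fl_zero then show ?case by (simp add: antipodal_def)
next
  case (fl_add a b) then show ?case by (simp add: antipodal_def algebra_simps)
next
  case (fl_smul a c) then show ?case by (simp add: antipodal_def smul_def)
next
  case (fl_bracket a b)
  show ?case unfolding antipodal_def
  proof
    fix w
    have "nmul a b (rev w) = (-1) ^ length w * nmul b a w" "nmul b a (rev w) = (-1) ^ length w * nmul a b w"
      using fl_bracket by (simp_all add: antipodal_nmul)
    then show "bracket a b (rev w) = - ((-1) ^ length w) * bracket a b w"
      unfolding bracket_def by (simp add: right_diff_distrib)
  qed
qed

definition xpart :: "nat \<Rightarrow> ncs \<Rightarrow> ncs" where
  "xpart k a = (\<lambda>w. if count_list w X = k then a w else 0)"

lemma xpart_polys: "a \<in> polys \<Longrightarrow> xpart k a \<in> polys"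
  unfolding polys_iff by (erule finite_subset[rotated]) (auto simp: supp_def xpart_def)

lemma xpart_xhomog: "xhomog k (xpart k a)" by (simp add: xhomog_def xpart_def)

lemma xpart_add: "xpart k (a + b) = xpart k a + xpart k b" by (simp add: xpart_def fun_eq_iff)

lemma xpart_diff: "xpart k (a - b) = xpart k a - xpart k b" by (simp add: xpart_def fun_eq_iff)

lemma xpart_smul: "xpart k (smul c a) = smul c (xpart k a)" by (simp add: xpart_def smul_def fun_eq_iff)

lemma xpart_zero: "xpart k 0 = 0" by (simp add: xpart_def fun_eq_iff)

lemma xpart_id: "xhomog k a \<Longrightarrow> xpart k a = a" by (auto simp: xpart_def xhomog_def fun_eq_iff)

lemma xpart_genX: "xpart k (gen X) = (if k = 1 then gen X else 0)"
  by (auto simp: xpart_def gen_def mono_def fun_eq_iff)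

lemma xpart_genY: "xpart k (gen Y) = (if k = 0 then gen Y else 0)"
  by (auto simp: xpart_def gen_def mono_def fun_eq_iff)

lemma xpart_nmul: "xpart k (nmul a b) = (\<lambda>v. \<Sum>i\<le>k. nmul (xpart i a) (xpart (k - i) b) v)"
proof
  fix v :: "letter list"
  have cnt: "count_list (take l v) X + count_list (drop l v) X = count_list v X" for l
    by (metis append_take_drop_id count_list_append)
  have "(\<Sum>i\<le>k. nmul (xpart i a) (xpart (k - i) b) v)
      = (\<Sum>i\<le>k. \<Sum>l\<le>length v. if count_list (take l v) X = i \<and> count_list (drop l v) X = k - i
            then a (take l v) * b (drop l v) else 0)"
    unfolding nmul_def xpart_def by (intro sum.cong refl) auto
  also have "\<dots> = (\<Sum>l\<le>length v. \<Sum>i\<le>k. if count_list (take l v) X = i \<and> count_list (drop l v) X = k - i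
            then a (take l v) * b (drop l v) else 0)"
    by (rule sum.swap)
  also have "\<dots> = (\<Sum>l\<le>length v. if count_list v X = k then a (take l v) * b (drop l v) else 0)"
  proof (intro sum.cong refl)
    fix l
    have "(\<Sum>i\<le>k. if count_list (take l v) X = i \<and> count_list (drop l v) X = k - i
            then a (take l v) * b (drop l v) else 0)
        = (\<Sum>i\<le>k. if i = count_list (take l v) X then
            (if count_list v X = k then a (take l v) * b (drop l v) else 0) else 0)"
      using cnt[of l] by (intro sum.cong refl) auto
    also have "\<dots> = (if count_list v X = k then a (take l v) * b (drop l v) else 0)"
      using cnt[of l] by (auto simp: sum.delta')
    finally show "(\<Sum>i\<le>k. if count_list (take l v) X = i \<and> count_list (drop l v) X = k - i
            then a (take l v) * b (drop l v) else 0) = (if count_list v X = k then a (take l v) * b (drop l v) else 0)" .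
  qed
  also have "\<dots> = xpart k (nmul a b) v"
    by (simp add: xpart_def nmul_def)
  finally show "xpart k (nmul a b) v = (\<Sum>i\<le>k. nmul (xpart i a) (xpart (k - i) b) v)" by simp
qed

lemma xpart_nmul_flip: "xpart k (nmul a b) = (\<lambda>v. \<Sum>i\<le>k. nmul (xpart (k - i) a) (xpart i b) v)"
  unfolding xpart_nmul
  by (rule ext, subst sum_atMost_flip) (intro sum.cong refl, simp)

lemma ceval_xpart_nmul: assumes "a \<in> polys" "b \<in> polys"
  shows "ceval (xpart k (nmul a b)) t = (\<Sum>i\<le>k. ceval (xpart i a) t * ceval (xpart (k - i) b) (shift i t))"
proof -
  have "ceval (xpart k (nmul a b)) t = (\<Sum>i\<le>k. ceval (nmul (xpart i a) (xpart (k - i) b)) t)"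
    unfolding xpart_nmul using assms by (intro ceval_sum) (auto intro: polys_nmul xpart_polys)
  also have "\<dots> = (\<Sum>i\<le>k. ceval (xpart i a) t * ceval (xpart (k - i) b) (shift i t))"
    using assms by (intro sum.cong refl ceval_nmul xpart_polys xpart_xhomog)
  finally show ?thesis .
qed

lemma ceval_xpart_nmul_flip: assumes "a \<in> polys" "b \<in> polys"
  shows "ceval (xpart k (nmul a b)) t = (\<Sum>i\<le>k. ceval (xpart (k - i) a) t * ceval (xpart i b) (shift (k - i) t))"
proof -
  have "ceval (xpart k (nmul a b)) t = (\<Sum>i\<le>k. ceval (nmul (xpart (k - i) a) (xpart i b)) t)"
    unfolding xpart_nmul_flip using assms by (intro ceval_sum) (auto intro: polys_nmul xpart_polys)
  also have "\<dots> = (\<Sum>i\<le>k. ceval (xpart (k - i) a) t * ceval (xpart i b) (shift (k - i) t))"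
    using assms by (intro sum.cong refl ceval_nmul xpart_polys xpart_xhomog)
  finally show ?thesis .
qed

lemma ceval_xpart_bracket:
  assumes "a \<in> polys" "b \<in> polys"
  shows "ceval (xpart k (bracket a b)) t =
    (\<Sum>i\<le>k. ceval (xpart i a) t * ceval (xpart (k - i) b) (shift i t)
      - ceval (xpart (k - i) b) t * ceval (xpart i a) (shift (k - i) t))"
proof -
  have "ceval (xpart k (bracket a b)) t = ceval (xpart k (nmul a b)) t - ceval (xpart k (nmul b a)) t"
    unfolding bracket_def xpart_diff using assms by (intro ceval_diff xpart_polys polys_nmul)
  then show ?thesis
    unfolding ceval_xpart_nmul[OF assms] ceval_xpart_nmul_flip[OF assms(2,1)] by (simp add: sum_subtractf)
qed

text \<open>
  The \<open>x\<close>-free part of a Lie element is a multiple of \<open>y\<close>, and bracketing with \<open>y\<close> multiplies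
  the evaluation of an element with \<open>k\<close> letters \<open>x\<close> by \<open>t 0 - t k\<close>, which is
  translation invariant.
\<close>
definition transl_inv :: "ncs \<Rightarrow> bool" where
  "transl_inv l \<longleftrightarrow> (\<exists>\<alpha>. \<forall>t. ceval (xpart 0 l) t = \<alpha> * t 0) \<and>
     (\<forall>k t c. 0 < k \<longrightarrow> ceval (xpart k l) (\<lambda>i. t i + c) = ceval (xpart k l) t)"

lemma shift_plus: "shift m (\<lambda>j. t j + c) = (\<lambda>j. shift m t j + c)" by (simp add: shift_def)

lemma shift_apply0: "shift m t 0 = t m" by (simp add: shift_def)

lemma transl_inv_bracket:
  assumes "a \<in> polys" "b \<in> polys" "transl_inv a" "transl_inv b"
  shows "transl_inv (bracket a b)"
proof -
  obtain \<alpha> where a0: "\<And>t. ceval (xpart 0 a) t = \<alpha> * t 0" using assms(3) by (auto simp: transl_inv_def)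
  obtain \<beta> where b0: "\<And>t. ceval (xpart 0 b) t = \<beta> * t 0" using assms(4) by (auto simp: transl_inv_def)
  have a: "\<And>k t c. 0 < k \<Longrightarrow> ceval (xpart k a) (\<lambda>i. t i + c) = ceval (xpart k a) t"
    using assms(3) by (auto simp: transl_inv_def)
  have b: "\<And>k t c. 0 < k \<Longrightarrow> ceval (xpart k b) (\<lambda>i. t i + c) = ceval (xpart k b) t"
    using assms(4) by (auto simp: transl_inv_def)
  define T where "T k i t = ceval (xpart i a) t * ceval (xpart (k - i) b) (shift i t)
      - ceval (xpart (k - i) b) t * ceval (xpart i a) (shift (k - i) t)" for k i t
  have ceval_bracket: "ceval (xpart k (bracket a b)) t = (\<Sum>i\<le>k. T k i t)" for k t
    unfolding T_def by (rule ceval_xpart_bracket[OF assms(1,2)])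
  have "ceval (xpart k (bracket a b)) (\<lambda>i. t i + c) = ceval (xpart k (bracket a b)) t"
    if k: "0 < k" for k t c
    unfolding ceval_bracket
  proof (intro sum.cong refl)
    fix i assume "i \<in> {..k}"
    then consider "i = 0" | "i = k" | "0 < i" "0 < k - i" by fastforce
    then show "T k i (\<lambda>i. t i + c) = T k i t"
    proof cases
      case 1
      then show ?thesis using k unfolding T_def shift_plus
        by (simp add: a0 b shift_apply0) (simp add: algebra_simps)
    next
      case 2
      then show ?thesis using k unfolding T_def shift_plus
        by (simp add: b0 a shift_apply0) (simp add: algebra_simps)
    next
      case 3
      then show ?thesis unfolding T_def shift_plus by (simp add: a b)
    qed
  qed
  moreover have "ceval (xpart 0 (bracket a b)) t = 0 * t 0" for t
    unfolding ceval_bracket T_def by simp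
  ultimately show ?thesis unfolding transl_inv_def by blast
qed

lemma freeLie_transl_inv: "l \<in> freeLie \<Longrightarrow> transl_inv l"
proof (induction rule: freeLie.induct)
  case (fl_gen c)
  show ?case
  proof (cases c)
    case X then show ?thesis
      by (auto simp: transl_inv_def xpart_genX ceval_zero ceval_genX intro: exI[where x=0])
  next
    case Y then show ?thesis
      by (auto simp: transl_inv_def xpart_genY ceval_zero ceval_genY intro: exI[where x=1])
  qed
next
  case fl_zero then show ?case by (simp add: transl_inv_def xpart_zero ceval_zero)
next
  case (fl_add a b)
  then have pa: "a \<in> polys" "b \<in> polys" by (simp_all add: freeLie_polys)
  from fl_add obtain \<alpha> \<beta> where "\<And>t. ceval (xpart 0 a) t = \<alpha> * t 0" "\<And>t. ceval (xpart 0 b) t = \<beta> * t 0"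
    by (auto simp: transl_inv_def)
  then have "ceval (xpart 0 (a + b)) t = (\<alpha> + \<beta>) * t 0" for t
    using pa by (simp add: xpart_add ceval_add xpart_polys algebra_simps)
  moreover have "ceval (xpart k (a + b)) (\<lambda>i. t i + c) = ceval (xpart k (a + b)) t" if "0 < k" for k t c
    using pa fl_add that by (simp add: xpart_add ceval_add xpart_polys transl_inv_def)
  ultimately show ?case unfolding transl_inv_def by blast
next
  case (fl_smul a c)
  then have pa: "a \<in> polys" by (simp add: freeLie_polys)
  from fl_smul obtain \<alpha> where "\<And>t. ceval (xpart 0 a) t = \<alpha> * t 0" by (auto simp: transl_inv_def)
  then have "ceval (xpart 0 (smul c a)) t = (c * \<alpha>) * t 0" for t
    using pa by (simp add: xpart_smul ceval_smul xpart_polys)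
  moreover have "ceval (xpart k (smul c a)) (\<lambda>i. t i + d) = ceval (xpart k (smul c a)) t" if "0 < k" for k t d
    using pa fl_smul that by (simp add: xpart_smul ceval_smul xpart_polys transl_inv_def)
  ultimately show ?case unfolding transl_inv_def by blast
next
  case (fl_bracket a b) then show ?case by (simp add: transl_inv_bracket freeLie_polys)
qed

lemma ceval_translate: assumes "F \<in> freeLie" "xhomog 2 F" shows "ceval F (\<lambda>i. t i + c) = ceval F t"
  using freeLie_transl_inv[OF assms(1)] xpart_id[OF assms(2)] unfolding transl_inv_def by (metis zero_less_numeral)

section \<open>Words with two letters \<open>x\<close>\<close>

definition word1 :: "nat \<Rightarrow> nat \<Rightarrow> letter list" where
  "word1 m n = replicate m Y @ X # replicate n Y"

definition word2 :: "nat \<Rightarrow> nat \<Rightarrow> nat \<Rightarrow> letter list" where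
  "word2 a b c = replicate a Y @ X # replicate b Y @ X # replicate c Y"

lemma count_X_2_imp_word2: assumes "count_list w X = 2" shows "\<exists>a b c. w = word2 a b c"
proof -
  have "X \<in> set w" using assms count_X_eq_0_iff[of w] by auto
  then obtain a w1 where w1: "w = replicate a Y @ X # w1" using split_first_X by blast
  then have c1: "count_list w1 X = 1" using assms by (simp add: count_list_append count_X_replicate_Y)
  then have "X \<in> set w1" using count_X_eq_0_iff[of w1] by auto
  then obtain b w2 where w2: "w1 = replicate b Y @ X # w2" using split_first_X by blast
  then have "count_list w2 X = 0" using c1 by (simp add: count_list_append count_X_replicate_Y)
  then have "w2 = replicate (length w2) Y" by (rule no_X_imp_replicate_Y)
  then show ?thesis using w1 w2 unfolding word2_def by metis
qed

lemma supp_word2: assumes "xhomog 2 h" "w \<in> supp h" shows "\<exists>a b c. w = word2 a b c"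
  using assms by (intro count_X_2_imp_word2) (simp add: xhomog_def supp_def)

lemma cmon_word1: "cmon (word1 m n) t = t 0 ^ m * t 1 ^ n"
  by (simp add: word1_def cmon_replicate_Y_X cmon_replicate_Y)

lemma cmon_word2: "cmon (word2 a b c) t = t 0 ^ a * t 1 ^ b * t 2 ^ c"
  by (simp add: word2_def cmon_replicate_Y_X cmon_replicate_Y numeral_2_eq_2)

definition pt3 :: "real \<Rightarrow> real \<Rightarrow> real \<Rightarrow> nat \<Rightarrow> real" where
  "pt3 a b c = (\<lambda>i. if i = 0 then a else if i = 1 then b else c)"

lemma pt3_simps[simp]: "pt3 a b c 0 = a" "pt3 a b c 1 = b" "pt3 a b c 2 = c"
  "pt3 a b c (Suc 0) = b" "pt3 a b c (Suc (Suc 0)) = c"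
  by (simp_all add: pt3_def)

lemma le2_cases: "(i::nat) \<le> 2 \<Longrightarrow> i = 0 \<or> i = 1 \<or> i = 2" by auto

lemma ceval_rev:
  assumes "antipodal F" "xhomog 2 F" "\<forall>w\<in>supp F. length w = n"
  shows "ceval F (pt3 c b a) = - ((-1) ^ n) * ceval F (pt3 a b c)"
proof -
  have mr: "cmon w (pt3 c b a) = cmon (rev w) (pt3 a b c)" if ws: "w \<in> supp F" for w
  proof -
    obtain x y z where w: "w = word2 x y z" using supp_word2[OF assms(2) ws] by blast
    have "rev w = word2 z y x" by (simp add: w word2_def)
    then show ?thesis by (simp add: w cmon_word2)
  qed
  have rs: "rev ` supp F = supp F"
  proof -
    have "F (rev v) \<noteq> 0 \<longleftrightarrow> F v \<noteq> 0" for v using assms(1) by (simp add: antipodal_def)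
    then show ?thesis by (auto simp: supp_def image_iff) (metis rev_rev_ident)
  qed
  have "ceval F (pt3 c b a) = (\<Sum>w\<in>supp F. F w * cmon (rev w) (pt3 a b c))"
    by (simp add: ceval_def mr)
  also have "\<dots> = (\<Sum>v\<in>rev ` supp F. F (rev v) * cmon v (pt3 a b c))"
    by (simp add: sum.reindex inj_on_def)
  also have "\<dots> = (\<Sum>v\<in>supp F. - ((-1) ^ n) * (F v * cmon v (pt3 a b c)))"
    unfolding rs using assms(1,3) by (intro sum.cong refl) (simp add: antipodal_def)
  also have "\<dots> = - ((-1) ^ n) * ceval F (pt3 a b c)"
    by (simp add: ceval_def sum_distrib_left)
  finally show ?thesis .
qed

lemma dcyc_word_no_X: assumes "count_list u X = 0" shows "dcyc_word X M u = 0"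
proof -
  have "\<forall>i<length u. u ! i \<noteq> X" using assms count_X_eq_0_iff[of u] nth_mem by metis
  then show ?thesis by (simp add: dcyc_word_def fun_eq_iff)
qed

lemma dcyc_word_X_single: "dcyc_word X M [X] = M" by (simp add: dcyc_word_def)

lemma dcyc_word_split_X: assumes "count_list u X = 0"
  shows "dcyc_word X M (u @ X # v) = nmul (mono v) (nmul M (mono u)) + dcyc_word X (nmul (nmul M (mono u)) (mono [X])) v"
proof -
  have "dcyc_word X M (u @ ([X] @ v)) = dcyc_word X (nmul (mono ([X] @ v)) M) u + dcyc_word X (nmul M (mono u)) ([X] @ v)"
    by (rule dcyc_word_append)
  also have "dcyc_word X (nmul M (mono u)) ([X] @ v) = dcyc_word X (nmul (mono v) (nmul M (mono u))) [X]
      + dcyc_word X (nmul (nmul M (mono u)) (mono [X])) v"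
    by (rule dcyc_word_append)
  finally show ?thesis using dcyc_word_no_X[OF assms] by (simp add: dcyc_word_X_single)
qed

lemma dcyc_word_word2: "dcyc_word X M (word2 a b c) = nmul (mono (replicate b Y @ X # replicate c Y)) (nmul M (mono (replicate a Y)))
  + nmul (mono (replicate c Y)) (nmul (nmul (nmul M (mono (replicate a Y))) (mono [X])) (mono (replicate b Y)))"
  unfolding word2_def
  by (simp add: dcyc_word_split_X count_X_replicate_Y dcyc_word_no_X)

lemma dcyc_word_one_word2: "dcyc_word X (mono []) (word2 a b c) = mono (word1 b (c + a)) + mono (word1 (c + a) b)"
  by (subst dcyc_word_word2) (simp add: nmul_mono_mono word1_def replicate_add)

lemma dcyc_word_X_word2: "dcyc_word X (gen X) (word2 a b c) = mono (word2 b c a) + mono (word2 c a b)"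
  by (subst dcyc_word_word2) (simp add: nmul_mono_mono word2_def gen_def)

lemma ceval_dcyc_X: assumes "h \<in> polys" "xhomog 2 h"
  shows "ceval (dcyc X h) t = ceval h (pt3 (t 1) (t 0) (t 1)) + ceval h (pt3 (t 0) (t 1) (t 0))"
proof -
  have pol: "dcyc_word X (mono []) w \<in> polys" if "w \<in> supp h" for w
    using supp_word2[OF assms(2) that] by (auto simp: dcyc_word_one_word2 polys_add polys_mono)
  have "ceval (dcyc X h) t = (\<Sum>w\<in>supp h. h w * ceval (dcyc_word X (mono []) w) t)"
    unfolding dcyc_eq_dcyc_with_one[OF assms(1)] dcyc_with_def by (rule ceval_linext_poly[OF assms(1) pol])
  also have "\<dots> = (\<Sum>w\<in>supp h. h w * cmon w (pt3 (t 1) (t 0) (t 1)) + h w * cmon w (pt3 (t 0) (t 1) (t 0)))"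
  proof (intro sum.cong refl)
    fix w assume "w \<in> supp h"
    then obtain a b c where w: "w = word2 a b c" using supp_word2[OF assms(2)] by blast
    show "h w * ceval (dcyc_word X (mono []) w) t = h w * cmon w (pt3 (t 1) (t 0) (t 1)) + h w * cmon w (pt3 (t 0) (t 1) (t 0))"
      unfolding w dcyc_word_one_word2 using polys_mono
      by (simp add: ceval_add ceval_mono cmon_word1 cmon_word2 power_add algebra_simps)
  qed
  also have "\<dots> = ceval h (pt3 (t 1) (t 0) (t 1)) + ceval h (pt3 (t 0) (t 1) (t 0))"
    by (simp add: ceval_def sum.distrib)
  finally show ?thesis .
qed

lemma ceval_dcyc_X_mul_X: assumes "B \<in> polys" "xhomog 2 B"
  shows "ceval (dcyc X (nmul (gen X) B)) t = ceval B t + ceval B (pt3 (t 2) (t 0) (t 1)) + ceval B (pt3 (t 1) (t 2) (t 0))"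
proof -
  have pol: "dcyc_word X (gen X) w \<in> polys" if "w \<in> supp B" for w
    using supp_word2[OF assms(2) that] by (auto simp: dcyc_word_X_word2 polys_add polys_mono)
  have "dcyc X (nmul (gen X) B) = dcyc_with X B (gen X) + dcyc_with X (gen X) B"
    by (rule dcyc_nmul[OF polys_gen assms(1)])
  also have "\<dots> = B + linext (dcyc_word X (gen X)) B" by (simp only: dcyc_with_gen if_True) (simp add: dcyc_with_def)
  finally have e: "dcyc X (nmul (gen X) B) = B + linext (dcyc_word X (gen X)) B" .
  have p2: "linext (dcyc_word X (gen X)) B \<in> polys" by (rule polys_linext[OF assms(1) pol])
  have "ceval (linext (dcyc_word X (gen X)) B) t = (\<Sum>w\<in>supp B. B w * ceval (dcyc_word X (gen X) w) t)"
    by (rule ceval_linext_poly[OF assms(1) pol])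
  also have "\<dots> = (\<Sum>w\<in>supp B. B w * cmon w (pt3 (t 2) (t 0) (t 1)) + B w * cmon w (pt3 (t 1) (t 2) (t 0)))"
  proof (intro sum.cong refl)
    fix w assume "w \<in> supp B"
    then obtain a b c where w: "w = word2 a b c" using supp_word2[OF assms(2)] by blast
    show "B w * ceval (dcyc_word X (gen X) w) t = B w * cmon w (pt3 (t 2) (t 0) (t 1)) + B w * cmon w (pt3 (t 1) (t 2) (t 0))"
      unfolding w dcyc_word_X_word2 using polys_mono
      by (simp add: ceval_add ceval_mono cmon_word2 algebra_simps)
  qed
  also have "\<dots> = ceval B (pt3 (t 2) (t 0) (t 1)) + ceval B (pt3 (t 1) (t 2) (t 0))"
    by (simp add: ceval_def sum.distrib)
  finally show ?thesis unfolding e using assms(1) p2 by (simp add: ceval_add)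
qed

lemma cmon_snoc_X: "cmon (p @ [X]) t = cmon p t"
  by (simp add: cmon_append)

lemma cmon_snoc_Y: "cmon (p @ [Y]) t = cmon p t * t (count_list p X)"
  by (simp add: cmon_append shift_def)

lemma ceval_snoc: assumes "H \<in> polys"
  shows "ceval (\<lambda>p. H (p @ [c])) t = (\<Sum>v\<in>supp H. if v \<noteq> [] \<and> last v = c then H v * cmon (butlast v) t else 0)"
proof -
  have fin: "finite (supp H)" using assms by (simp add: polys_iff)
  have inj: "inj_on (\<lambda>p. p @ [c]) (supp (\<lambda>p. H (p @ [c])))" by (auto simp: inj_on_def)
  have img: "(\<lambda>p. p @ [c]) ` supp (\<lambda>p. H (p @ [c])) = {v\<in>supp H. v \<noteq> [] \<and> last v = c}"
  proof (intro equalityI subsetI)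
    fix v assume "v \<in> {v\<in>supp H. v \<noteq> [] \<and> last v = c}"
    then have "v = butlast v @ [c]" "butlast v \<in> supp (\<lambda>p. H (p @ [c]))"
      by (auto simp: supp_def)
    then show "v \<in> (\<lambda>p. p @ [c]) ` supp (\<lambda>p. H (p @ [c]))" by blast
  qed (auto simp: supp_def)
  have "(\<Sum>v\<in>supp H. if v \<noteq> [] \<and> last v = c then H v * cmon (butlast v) t else 0)
      = (\<Sum>v\<in>{v\<in>supp H. v \<noteq> [] \<and> last v = c}. H v * cmon (butlast v) t)"
    using fin by (simp add: sum.inter_filter)
  also have "\<dots> = (\<Sum>p\<in>supp (\<lambda>p. H (p @ [c])). H (p @ [c]) * cmon p t)"
    unfolding img[symmetric] by (simp add: sum.reindex[OF inj])
  finally show ?thesis by (simp add: ceval_def)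
qed

lemma ceval_dL_X: assumes "G \<in> polys" "xhomog 3 G"
  shows "ceval (dL X G) t = ceval G (t(3 := 0))"
proof -
  have "ceval (dL X G) t = (\<Sum>v\<in>supp G. if v \<noteq> [] \<and> last v = X then G v * cmon (butlast v) t else 0)"
    unfolding dL_eq by (rule ceval_snoc[OF assms(1)])
  also have "\<dots> = (\<Sum>v\<in>supp G. G v * cmon v (t(3 := 0)))"
  proof (intro sum.cong refl)
    fix v assume v: "v \<in> supp G"
    then have c3: "count_list v X = 3" using assms(2) by (simp add: xhomog_def supp_def)
    then have "v \<noteq> []" by auto
    then obtain p l where vp: "v = p @ [l]" by (metis append_butlast_last_id)
    show "(if v \<noteq> [] \<and> last v = X then G v * cmon (butlast v) t else 0) = G v * cmon v (t(3 := 0))"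
    proof (cases l)
      case X
      then have "count_list p X = 2" using c3 vp by (simp add: count_list_append)
      then have "cmon p (t(3 := 0)) = cmon p t" by (intro cmon_cong) auto
      then show ?thesis using vp X by (simp add: cmon_snoc_X)
    next
      case Y
      then have "count_list p X = 3" using c3 vp by (simp add: count_list_append)
      then show ?thesis using vp Y by (simp add: cmon_snoc_Y)
    qed
  qed
  also have "\<dots> = ceval G (t(3 := 0))" by (simp add: ceval_def)
  finally show ?thesis .
qed

lemma ceval_dL_Y: assumes "F \<in> polys" "xhomog 2 F"
  shows "ceval (dL Y F) t * t 2 = ceval F t - ceval F (t(2 := 0))"
proof -
  have "ceval (dL Y F) t * t 2 = (\<Sum>v\<in>supp F. if v \<noteq> [] \<and> last v = Y then F v * cmon (butlast v) t * t 2 else 0)"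
    unfolding dL_eq ceval_snoc[OF assms(1)] sum_distrib_right by (intro sum.cong refl) auto
  also have "\<dots> = (\<Sum>v\<in>supp F. F v * cmon v t - F v * cmon v (t(2 := 0)))"
  proof (intro sum.cong refl)
    fix v assume v: "v \<in> supp F"
    then have c2: "count_list v X = 2" using assms(2) by (simp add: xhomog_def supp_def)
    then have "v \<noteq> []" by auto
    then obtain p l where vp: "v = p @ [l]" by (metis append_butlast_last_id)
    show "(if v \<noteq> [] \<and> last v = Y then F v * cmon (butlast v) t * t 2 else 0) = F v * cmon v t - F v * cmon v (t(2 := 0))"
    proof (cases l)
      case X
      then have "count_list p X = 1" using c2 vp by (simp add: count_list_append)
      then have "cmon p (t(2 := 0)) = cmon p t" by (intro cmon_cong) auto
      then show ?thesis using vp X by (simp add: cmon_snoc_X)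
    next
      case Y
      then have "count_list p X = 2" using c2 vp by (simp add: count_list_append)
      then show ?thesis using vp Y by (simp add: cmon_snoc_Y)
    qed
  qed
  also have "\<dots> = ceval F t - ceval F (t(2 := 0))" by (simp add: ceval_def sum_subtractf)
  finally show ?thesis .
qed

text \<open>
  Both words of \<open>x * dcyc_word X 1 w\<close> are rotations of \<open>w\<close>, so \<open>w\<close> agrees with half their sum
  up to commutators.
\<close>
lemma trzero_word2: "trzero (mono (word2 a b c) - smul (1/2) (nmul (gen X) (dcyc_word X (mono []) (word2 a b c))))"
proof -
  let ?w = "mono (word2 a b c)" and ?m1 = "mono (word2 0 b (c + a))" and ?m2 = "mono (word2 0 (c + a) b)"
  have e: "nmul (gen X) (dcyc_word X (mono []) (word2 a b c)) = ?m1 + ?m2"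
    by (subst dcyc_word_one_word2) (simp add: nmul_add_right gen_def nmul_mono_mono word1_def word2_def)
  have r1: "trzero (?w - ?m1)"
    using trzero_rot[of "replicate a Y" "X # replicate b Y @ X # replicate c Y"]
    by (simp add: word2_def replicate_add)
  have r2: "trzero (?m1 - ?m2)"
    using trzero_rot[of "X # replicate b Y" "X # replicate (c + a) Y"] by (simp add: word2_def)
  have eq: "?w - smul (1/2) (?m1 + ?m2) = smul (1/2) (?w - ?m1) + smul (1/2) ((?w - ?m1) + (?m1 - ?m2))"
    by (simp add: fun_eq_iff smul_def algebra_simps)
  show ?thesis unfolding e eq by (intro trzero_add trzero_smul r1 r2)
qed

lemma trzero_if_dcyc_X_eq_0: assumes "h \<in> polys" "xhomog 2 h" "dcyc X h = 0" shows "trzero h"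
proof -
  let ?f = "\<lambda>w. mono w - smul (1/2) (nmul (gen X) (dcyc_word X (mono []) w))"
  have t: "trzero (linext ?f h)"
    using assms(1) by (rule trzero_linext) (metis supp_word2[OF assms(2)] trzero_word2)
  have "linext (\<lambda>w. nmul (gen X) (dcyc_word X (mono []) w)) h = nmul (gen X) (linext (dcyc_word X (mono [])) h)"
    unfolding linext_def by (simp only: nmul_sum_right nmul_cmult_right)
  also have "\<dots> = 0" using assms by (simp add: dcyc_eq_dcyc_with_one dcyc_with_def)
  finally have z: "linext (\<lambda>w. nmul (gen X) (dcyc_word X (mono []) w)) h = 0" .
  have "linext ?f h = linext mono h - smul (1/2) (linext (\<lambda>w. nmul (gen X) (dcyc_word X (mono []) w)) h)"
    by (rule linext_diff_fun)
  also have "\<dots> = h" using z linext_mono_id[OF assms(1)] by (simp add: smul_zero)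
  finally show ?thesis using t by simp
qed

section \<open>The component of bidegree \<open>(3, j)\<close>\<close>

lemma ceval_xy_relation:
  assumes "F \<in> polys" "G \<in> polys" "xhomog 2 F" "xhomog 3 G" "bracket G (gen Y) + bracket (gen X) F = 0"
  shows "(t 3 - t 0) * ceval G t = ceval F t - ceval F (shift 1 t)"
proof -
  have p: "nmul G (gen Y) \<in> polys" "nmul (gen Y) G \<in> polys" "nmul (gen X) F \<in> polys" "nmul F (gen X) \<in> polys"
    using assms by (simp_all add: polys_nmul polys_gen)
  have "0 = ceval (bracket G (gen Y) + bracket (gen X) F) t" using assms(5) by (simp add: ceval_zero)
  also have "\<dots> = (ceval (nmul G (gen Y)) t - ceval (nmul (gen Y) G) t) + (ceval (nmul (gen X) F) t - ceval (nmul F (gen X)) t)"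
    unfolding bracket_def using p by (simp add: ceval_add ceval_diff polys_diff)
  also have "\<dots> = (ceval G t * t 3 - t 0 * ceval G t) + (ceval F (shift 1 t) - ceval F t)"
    using assms p
    by (simp add: ceval_nmul[OF _ polys_gen assms(4)] ceval_nmul[OF polys_gen _ xhomog_genY]
        ceval_nmul[OF polys_gen _ xhomog_genX] ceval_nmul[OF _ polys_gen assms(3)] ceval_genX ceval_genY shift_def)
  finally show ?thesis by (simp add: algebra_simps)
qed

lemma commutes_with_Y_xhomog_Suc:
  assumes "xhomog (Suc k) a" "bracket a (gen Y) = 0"
  shows "a = 0"
proof (rule commutes_with_Y_imp_0)
  show "nmul a (gen Y) = nmul (gen Y) a" using assms(2) by (simp add: bracket_def)
  show "X \<in> set w" if "a w \<noteq> 0" for w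
    using assms(1) that count_X_eq_0_iff[of w] by (auto simp: xhomog_def)
qed

text \<open>
  Instantiated with \<open>F = u(y)\<close>, \<open>G = u(x)\<close> and \<open>n = j + 2\<close> for a derivation \<open>u\<close> of
  bidegree \<open>(3, j)\<close> that kills \<open>[x, y]\<close>.
\<close>
locale krv3_pair =
  fixes F G :: ncs and n :: nat
  assumes F_freeLie: "F \<in> freeLie" and F_xhomog: "xhomog 2 F"
    and F_length: "\<forall>w\<in>supp F. length w = n"
    and G_polys: "G \<in> polys" and G_xhomog: "xhomog 3 G"
    and xy_relation: "bracket G (gen Y) + bracket (gen X) F = 0"
begin

abbreviation divergence :: ncs where
  "divergence \<equiv> dL X G + dL Y F"

lemma F_polys: "F \<in> polys"
  using F_freeLie freeLie_polys by blast

lemma polys_divergence: "divergence \<in> polys"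
  by (simp add: polys_add dL_polys F_polys G_polys)

lemma xhomog_divergence: "xhomog 2 divergence"
  using G_xhomog F_xhomog by (intro xhomog_add xhomog_dL) (simp_all add: numeral_3_eq_3)

text \<open>Setting \<open>t 3 = t 0\<close> removes \<open>G\<close> from the evaluated relation.\<close>
lemma ceval_F_rotate: "ceval F (pt3 a b c) = ceval F (pt3 b c a)"
proof -
  let ?t = "(pt3 a b c)(3 := a)"
  have "(?t 3 - ?t 0) * ceval G ?t = ceval F ?t - ceval F (shift 1 ?t)"
    by (rule ceval_xy_relation[OF F_polys G_polys F_xhomog G_xhomog xy_relation])
  moreover have "ceval F ?t = ceval F (pt3 a b c)"
    by (rule ceval_cong[OF F_xhomog]) (auto dest!: le2_cases)
  moreover have "ceval F (shift 1 ?t) = ceval F (pt3 b c a)"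
    by (rule ceval_cong[OF F_xhomog]) (auto dest!: le2_cases simp: shift_def)
  ultimately show ?thesis by simp
qed

lemma ceval_F_swap: "ceval F (pt3 r s 0) = - ((-1) ^ n) * ceval F (pt3 s r 0)"
  using ceval_F_rotate[of 0 r s] ceval_rev[OF freeLie_antipodal[OF F_freeLie] F_xhomog F_length, of 0 r s]
  by simp

lemma ceval_divergence:
  "s * ceval divergence (pt3 s r s) = ceval F (pt3 r s 0) - ceval F (pt3 s r 0)"
proof -
  let ?t = "(pt3 s r s)(3 := 0)"
  have "(?t 3 - ?t 0) * ceval G ?t = ceval F ?t - ceval F (shift 1 ?t)"
    by (rule ceval_xy_relation[OF F_polys G_polys F_xhomog G_xhomog xy_relation])
  moreover have "ceval F ?t = ceval F (pt3 s r s)"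
    by (rule ceval_cong[OF F_xhomog]) (auto dest!: le2_cases)
  moreover have "ceval F (shift 1 ?t) = ceval F (pt3 r s 0)"
    by (rule ceval_cong[OF F_xhomog]) (auto dest!: le2_cases simp: shift_def)
  ultimately have G_part: "s * ceval G ?t = ceval F (pt3 r s 0) - ceval F (pt3 s r s)"
    by (simp add: algebra_simps)
  have "ceval F ((pt3 s r s)(2 := 0)) = ceval F (pt3 s r 0)"
    by (rule ceval_cong[OF F_xhomog]) (auto dest!: le2_cases)
  then have F_part: "s * ceval (dL Y F) (pt3 s r s) = ceval F (pt3 s r s) - ceval F (pt3 s r 0)"
    using ceval_dL_Y[OF F_polys F_xhomog, of "pt3 s r s"] by (simp add: mult.commute)
  have "ceval divergence (pt3 s r s) = ceval G ?t + ceval (dL Y F) (pt3 s r s)"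
    by (simp add: ceval_add dL_polys F_polys G_polys ceval_dL_X[OF G_polys G_xhomog])
  then show ?thesis using G_part F_part by (simp add: distrib_left)
qed

lemma trzero_divergence_if_odd:
  assumes "odd n"
  shows "trzero divergence"
proof -
  have vanish: "s * ceval divergence (pt3 s r s) = 0" for s r
    using ceval_divergence[of s r] ceval_F_swap[of r s] assms by simp
  have "t 0 * ceval (dcyc X divergence) t * t 1 = 0" for t
  proof -
    have "t 0 * ceval (dcyc X divergence) t * t 1
        = t 0 * (t 1 * ceval divergence (pt3 (t 1) (t 0) (t 1)))
          + t 1 * (t 0 * ceval divergence (pt3 (t 0) (t 1) (t 0)))"
      by (simp add: ceval_dcyc_X[OF polys_divergence xhomog_divergence] algebra_simps)
    then show ?thesis by (simp only: vanish)
  qed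
  moreover have "xhomog 1 (dcyc X divergence)"
    using xhomog_dcyc_X[of 1] xhomog_divergence by (simp add: numeral_2_eq_2)
  ultimately have "dcyc X divergence = 0"
    by (intro xhomog1_eq_0_if_ceval_YQY polys_dcyc polys_divergence)
  then show ?thesis by (rule trzero_if_dcyc_X_eq_0[OF polys_divergence xhomog_divergence])
qed

lemma F_eq_0_if_even:
  assumes "even n" "trzero divergence"
  shows "F = 0"
proof -
  have sum_zero: "ceval divergence (pt3 r s r) + ceval divergence (pt3 s r s) = 0" for r s
    using ceval_dcyc_X[OF polys_divergence xhomog_divergence, of "pt3 s r 0"]
      dcyc_eq_0_if_trzero[OF assms(2)] by (simp add: ceval_zero)
  have "(r - s) * (ceval F (pt3 r s 0) - ceval F (pt3 s r 0)) = 0" for r s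
  proof -
    have "r * (s * ceval divergence (pt3 s r s)) + s * (r * ceval divergence (pt3 r s r))
        = r * (ceval F (pt3 r s 0) - ceval F (pt3 s r 0)) + s * (ceval F (pt3 s r 0) - ceval F (pt3 r s 0))"
      by (simp only: ceval_divergence)
    then have "(r - s) * (ceval F (pt3 r s 0) - ceval F (pt3 s r 0))
        = s * r * (ceval divergence (pt3 r s r) + ceval divergence (pt3 s r s))"
      by (simp add: algebra_simps)
    then show ?thesis using sum_zero[of r s] by simp
  qed
  then have "ceval F (pt3 r s 0) = ceval F (pt3 s r 0)" for r s
    by (cases "r = s") auto
  then have vanish: "ceval F (pt3 r s 0) = 0" for r s
    using ceval_F_swap[of r s] assms(1) by simp
  have "ceval F t = 0" for t
  proof -
    have "ceval F t = ceval F (\<lambda>i. t i + - t 2)"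
      by (rule ceval_translate[OF F_freeLie F_xhomog, symmetric])
    also have "\<dots> = ceval F (pt3 (t 0 - t 2) (t 1 - t 2) 0)"
      by (rule ceval_cong[OF F_xhomog]) (auto dest!: le2_cases)
    finally show ?thesis using vanish by simp
  qed
  then show ?thesis by (rule ceval_eq_0_imp_0[OF F_polys F_xhomog])
qed

lemma G_eq_0_if_F_eq_0: "F = 0 \<Longrightarrow> G = 0"
  using xy_relation G_xhomog commutes_with_Y_xhomog_Suc[of 2 G]
  by (simp add: bracket_def numeral_3_eq_3)

lemma G_unique:
  assumes "krv3_pair F G' n"
  shows "G' = G"
proof -
  have "xhomog (Suc 2) (G' - G)"
    using xhomog_diff[OF krv3_pair.G_xhomog[OF assms] G_xhomog] by (simp add: numeral_3_eq_3)
  moreover have "bracket G' (gen Y) = bracket G (gen Y)"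
    using krv3_pair.xy_relation[OF assms] xy_relation by (metis add_right_cancel)
  then have "bracket (G' - G) (gen Y) = 0"
    by (simp add: bracket_def nmul_diff_left nmul_diff_right algebra_simps)
  ultimately show ?thesis using commutes_with_Y_xhomog_Suc by fastforce
qed

lemma dcyc_X_mul_X_F: "dcyc X (nmul (gen X) F) = smul 3 F"
proof (rule ceval_inj)
  show "dcyc X (nmul (gen X) F) \<in> polys" by (simp add: polys_dcyc polys_nmul polys_gen F_polys)
  show "smul 3 F \<in> polys" by (rule polys_smul[OF F_polys])
  have "xhomog (Suc 2) (nmul (gen X) F)"
    using xhomog_nmul[OF xhomog_genX F_xhomog] by (simp add: numeral_3_eq_3)
  then show "xhomog 2 (dcyc X (nmul (gen X) F))" by (rule xhomog_dcyc_X)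
  show "xhomog 2 (smul 3 F)" by (rule xhomog_smul[OF F_xhomog])
  fix t
  have "ceval F t = ceval F (pt3 (t 0) (t 1) (t 2))"
    by (rule ceval_cong[OF F_xhomog]) (auto dest!: le2_cases)
  then show "ceval (dcyc X (nmul (gen X) F)) t = ceval (smul 3 F) t"
    using ceval_dcyc_X_mul_X[OF F_polys F_xhomog, of t]
      ceval_F_rotate[of "t 2" "t 0" "t 1"] ceval_F_rotate[of "t 1" "t 2" "t 0"]
    by (simp add: ceval_smul F_polys)
qed

end

lemma krv_components:
  assumes u: "u \<in> krv 3 j"
  shows "u \<in> DerL" "homog 2 (int j) (u (gen Y))"
    and "trzero (dL X (u (gen X)) + dL Y (u (gen Y)))"
    and "krv3_pair (u (gen Y)) (u (gen X)) (j + 2)"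
proof -
  show D: "u \<in> DerL" using u by (simp add: krv_def)
  have hom: "\<forall>l\<in>freeLie. \<forall>p q. homog p q l \<longrightarrow> homog (p + 3 - 1) (q + int j - 1) (u l)"
    using u by (simp add: krv_def)
  have hX: "homog 3 (int j - 1) (u (gen X))" using hom freeLie.fl_gen[of X] homog_genX by fastforce
  show hY: "homog 2 (int j) (u (gen Y))" using hom freeLie.fl_gen[of Y] homog_genY by fastforce
  show "trzero (dL X (u (gen X)) + dL Y (u (gen Y)))" using u by (simp add: krv_def divg_def)
  have L: "u (gen X) \<in> freeLie" "u (gen Y) \<in> freeLie" using D freeLie.fl_gen by (auto simp: DerL_def)
  show "krv3_pair (u (gen Y)) (u (gen X)) (j + 2)"
  proof
    show "u (gen Y) \<in> freeLie" "u (gen X) \<in> polys" using L freeLie_polys by auto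
    show "xhomog 2 (u (gen Y))" "xhomog 3 (u (gen X))"
      using homog_imp_xhomog[of 2] homog_imp_xhomog[of 3] hX hY by simp_all
    show "\<forall>w\<in>supp (u (gen Y)). length w = j + 2" by (rule homog2_length[OF hY])
    show "bracket (u (gen X)) (gen Y) + bracket (gen X) (u (gen Y)) = 0"
      using u DerL_bracket_xy[OF D] by (simp add: krv_def)
  qed
qed

lemma FLrep_components:
  assumes g: "g \<in> FLrep 3 j"
  shows "homog 3 (int j - 1) (dcyc Y g)" "homog 2 (int j) (- dcyc X g)"
    and "krv3_pair (- dcyc X g) (dcyc Y g) (j + 2)"
proof -
  have hg: "homog 3 (int j) g" using FLrep_homog[OF g] by simp
  show hY: "homog 3 (int j - 1) (dcyc Y g)" using dcyc_homog(2)[OF hg] .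
  show hX: "homog 2 (int j) (- dcyc X g)" using homog_uminus[OF dcyc_homog(1)[OF hg]] by simp
  show "krv3_pair (- dcyc X g) (dcyc Y g) (j + 2)"
  proof
    show "- dcyc X g \<in> freeLie" "dcyc Y g \<in> polys"
      using dcyc_FLrep_freeLie[OF g] freeLie_uminus freeLie_polys by auto
    show "xhomog 2 (- dcyc X g)" "xhomog 3 (dcyc Y g)"
      using homog_imp_xhomog[of 2] homog_imp_xhomog[of 3] hX hY by simp_all
    show "\<forall>w\<in>supp (- dcyc X g). length w = j + 2" by (rule homog2_length[OF hX])
    show "bracket (dcyc Y g) (gen Y) + bracket (gen X) (- dcyc X g) = 0"
      using uGamma_xy[OF g] DerL_bracket_xy[OF uGamma_DerL[OF g]] uGamma_gen by simp
  qed
qed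

lemma uGamma_krv:
  assumes g: "g \<in> FLrep 3 j" and "odd j"
  shows "uGamma g \<in> krv 3 j"
  unfolding krv_def
proof (intro CollectI conjI)
  interpret krv3_pair "- dcyc X g" "dcyc Y g" "j + 2" by (rule FLrep_components(3)[OF g])
  show "uGamma g \<in> DerL" by (rule uGamma_DerL[OF g])
  show "uGamma g (bracket (gen X) (gen Y)) = 0" by (rule uGamma_xy[OF g])
  show "trzero (divg (uGamma g))"
    using trzero_divergence_if_odd \<open>odd j\<close> by (simp add: divg_def uGamma_gen)
  show "\<forall>l\<in>freeLie. \<forall>p q. homog p q l \<longrightarrow> homog (p + int 3 - 1) (q + int j - 1) (uGamma g l)"
  proof (intro ballI allI impI)
    fix l p q assume l: "l \<in> freeLie" "homog p q l"
    have "homog (1 + 2) (int j - 1) (dcyc Y g)" "homog 2 (1 + (int j - 1)) (- dcyc X g)"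
      using FLrep_components(1,2)[OF g] by simp_all
    then have "homog (p + 2) (q + (int j - 1)) (derA (dcyc Y g) (- dcyc X g) l)"
      by (rule derA_homog[OF _ _ l(2)])
    then have "homog (p + 3 - 1) (q + int j - 1) (uGamma g l)"
      using l(1) by (simp add: uGamma_def algebra_simps)
    then show "homog (p + int 3 - 1) (q + int j - 1) (uGamma g l)"
      by (simp only: of_nat_numeral)
  qed
qed

lemma krv_even:
  assumes u: "u \<in> krv 3 j" and "even j"
  shows "u = (\<lambda>l. 0)"
proof -
  interpret krv3_pair "u (gen Y)" "u (gen X)" "j + 2" by (rule krv_components(4)[OF u])
  have "u (gen Y) = 0" using F_eq_0_if_even krv_components(3)[OF u] \<open>even j\<close> by simp
  moreover from this have "u (gen X) = 0" by (rule G_eq_0_if_F_eq_0)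
  ultimately show ?thesis using DerL_unique[OF krv_components(1)[OF u] zero_DerL] by simp
qed

text \<open>The preimage is \<open>\<Gamma> = tr(x B)\<close> with \<open>B = -u(y)/3\<close>, by \<open>dcyc_X_mul_X_F\<close>.\<close>
lemma krv_odd:
  assumes u: "u \<in> krv 3 j" and "odd j"
  shows "u \<in> uGamma ` FLrep 3 j"
proof -
  interpret krv3_pair "u (gen Y)" "u (gen X)" "j + 2" by (rule krv_components(4)[OF u])
  define B where "B = smul (-1/3) (u (gen Y))"
  have g: "nmul (gen X) B \<in> FLrep 3 j"
    unfolding FLrep_def
    by (rule lspan.lspan_base, rule CollectI, rule exI[of _ "gen X"], rule exI[of _ B],
        rule exI[of _ 1], rule exI[of _ 0], rule exI[of _ 2], rule exI[of _ "int j"])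
       (simp add: freeLie.fl_gen B_def freeLie.fl_smul F_freeLie homog_genX homog_smul
         krv_components(2)[OF u])
  have "dcyc X (nmul (gen X) B) = smul (-1/3) (smul 3 (u (gen Y)))"
    by (simp add: B_def nmul_smul_right dcyc_smul dcyc_X_mul_X_F)
  then have y_part: "uGamma (nmul (gen X) B) (gen Y) = u (gen Y)"
    by (simp add: uGamma_gen smul_def fun_eq_iff)
  have "krv3_pair (u (gen Y)) (dcyc Y (nmul (gen X) B)) (j + 2)"
    using FLrep_components(3)[OF g] y_part by (simp add: uGamma_gen)
  then have x_part: "uGamma (nmul (gen X) B) (gen X) = u (gen X)"
    using G_unique by (simp add: uGamma_gen)
  have "u = uGamma (nmul (gen X) B)"
    using DerL_unique[OF krv_components(1)[OF u] uGamma_DerL[OF g]] x_part y_part by simp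
  then show ?thesis using g by blast
qed

theorem mainTheorem2:
  fixes j :: nat
  shows "(even j \<longrightarrow> krv 3 j = {\<lambda>l. 0})
       \<and> (odd j \<longrightarrow> krv 3 j = uGamma ` FLrep 3 j)"
proof (intro conjI impI)
  assume "even j"
  then show "krv 3 j = {\<lambda>l. 0}" using krv_even zero_krv by blast
next
  assume "odd j"
  then show "krv 3 j = uGamma ` FLrep 3 j" using krv_odd uGamma_krv by blast
qed

end
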